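(* Let $\mathcal E$ be a finite dimensional Hilbert space, $n\ge2$, and let $(\psi_1,\dots,\psi_n)$ be a factorizing tuple. Then there is a unique pair $(\underline A,\underline B)$, where $\underline A=(A_1,\dots,A_n)$ is a tuple of self-adjoint operators and $\underline B=(B_1,\dots,B_n)$ a tuple of positive contractions on $\mathcal E$, satisfying (1) $A_jA_k=A_kA_j$ and $B_jB_k=B_kB_j$ for all $j,k$; (2) $A_jB_k+B_jA_k=A_kB_j+B_kA_j$ for all $j,k$; (3) $A_1+\cdots+A_n=0$ and $B_1+\cdots+B_n=I$; such that $(\psi_j(z)+I)(\psi_j(z)-I)^{-1}=iA_j+\zeta(z)B_j$ for all $z\in\mathbb D$ and $j=1,\dots,n$. Consequently $\psi_j(z)=(iA_j+\zeta(z)B_j+I)(iA_j+\zeta(z)B_j-I)^{-1}$ for all $z\in\mathbb D$ and all $j$.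
   Context: $\mathbb D$ is the open unit disc, $\zeta(z)=\frac{z+1}{z-1}$, $H^2_{\mathbb D}(\mathcal E)$ the $\mathcal E$-valued Hardy space, $M_\psi$ multiplication by $\psi$. $\mathcal C=\{\psi\in H^\infty_{\mathbb D}(\mathcal B(\mathcal E)):\sup_z\|\psi(z)\|\le1,\ 1\text{ is not an eigenvalue of }\psi(z)\text{ for any }z\in\mathbb D\}$. $\varphi_t(\lambda)=e^{t\frac{\lambda+1}{\lambda-1}}$, $(\varphi_t\circ\psi)(z)=\varphi_t(\psi(z))$, $\mathfrak z^{\mathcal E}(w)=wI_{\mathcal E}$. A tuple $(\psi_1,\dots,\psi_n)$ with $\psi_j\in\mathcal C$ is a factorizing tuple if $M_{\varphi_t\circ\psi_j}M_{\varphi_t\circ\psi_k}=M_{\varphi_t\circ\psi_k}M_{\varphi_t\circ\psi_j}$ for all $j,k$ and $t\ge0$, and $M_{\varphi_t\circ\psi_1}\cdots M_{\varphi_t\circ\psi_n}=M_{\varphi_t\circ\mathfrak z^{\mathcal E}}$ for all $t\ge0$. *)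

theory Defs
  imports "HOL-Analysis.Analysis"
begin


text \<open>The finite dimensional Hilbert space E is modelled as complex ^ 'n (norm = l2 norm);
  operators on E are complex matrices complex ^ 'n ^ 'n acting by *v.\<close>

type_synonym 'n cmat = "complex ^ 'n ^ 'n"

definition unit_disc :: "complex set" where
  "unit_disc = ball 0 1"

definition zeta :: "complex \<Rightarrow> complex" where
  "zeta z = (z + 1) / (z - 1)"

definition cscale :: "complex \<Rightarrow> ('n::finite) cmat \<Rightarrow> ('n::finite) cmat" where
  "cscale c A = (\<chi> i j. c * A $ i $ j)"

definition cinner :: "complex ^ ('n::finite) \<Rightarrow> complex ^ ('n::finite) \<Rightarrow> complex" where
  "cinner x y = (\<Sum>i\<in>UNIV. x $ i * cnj (y $ i))"

definition adjoint_mat :: "('n::finite) cmat \<Rightarrow> ('n::finite) cmat" where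
  "adjoint_mat A = (\<chi> i j. cnj (A $ j $ i))"

definition self_adjoint :: "('n::finite) cmat \<Rightarrow> bool" where
  "self_adjoint A \<longleftrightarrow> adjoint_mat A = A"

definition op_norm :: "('n::finite) cmat \<Rightarrow> real" where
  "op_norm A = onorm (\<lambda>x. A *v x)"

definition positive_op :: "('n::finite) cmat \<Rightarrow> bool" where
  "positive_op A \<longleftrightarrow> (\<forall>x. Im (cinner (A *v x) x) = 0 \<and> Re (cinner (A *v x) x) \<ge> 0)"

definition contraction :: "('n::finite) cmat \<Rightarrow> bool" where
  "contraction A \<longleftrightarrow> op_norm A \<le> 1"

fun mpow :: "('n::finite) cmat \<Rightarrow> nat \<Rightarrow> ('n::finite) cmat" where
  "mpow A 0 = mat 1"
| "mpow A (Suc k) = A ** mpow A k"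

definition mexp :: "('n::finite) cmat \<Rightarrow> ('n::finite) cmat" where
  "mexp A = (\<Sum>k. (1 / fact k) *\<^sub>R mpow A k)"

definition Hinf_op :: "(complex \<Rightarrow> ('n::finite) cmat) \<Rightarrow> bool" where
  "Hinf_op \<psi> \<longleftrightarrow> (\<forall>i j. (\<lambda>z. \<psi> z $ i $ j) holomorphic_on unit_disc) \<and>
     (\<exists>C. \<forall>z\<in>unit_disc. op_norm (\<psi> z) \<le> C)"

definition classC :: "(complex \<Rightarrow> ('n::finite) cmat) set" where
  "classC = {\<psi>. Hinf_op \<psi> \<and> (\<forall>z\<in>unit_disc. op_norm (\<psi> z) \<le> 1) \<and>
      (\<forall>z\<in>unit_disc. \<forall>x. \<psi> z *v x = x \<longrightarrow> x = 0)}"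

text \<open>phi_t applied (via functional calculus) to an operator:
  exp (t (L + I)(L - I)^{-1})\<close>
definition phi_op :: "real \<Rightarrow> ('n::finite) cmat \<Rightarrow> ('n::finite) cmat" where
  "phi_op t L = mexp (cscale (complex_of_real t) ((L + mat 1) ** matrix_inv (L - mat 1)))"

definition phi_comp :: "real \<Rightarrow> (complex \<Rightarrow> ('n::finite) cmat) \<Rightarrow> complex \<Rightarrow> ('n::finite) cmat" where
  "phi_comp t \<psi> = (\<lambda>z. phi_op t (\<psi> z))"

definition zfun :: "complex \<Rightarrow> ('n::finite) cmat" where
  "zfun w = mat w"

definition hardy2 :: "(complex \<Rightarrow> complex ^ ('n::finite)) set" where
  "hardy2 = {f. (\<forall>i. (\<lambda>z. f z $ i) holomorphic_on unit_disc) \<and>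
     (\<exists>C. \<forall>r. 0 \<le> r \<and> r < 1 \<longrightarrow>
        (\<lambda>\<theta>. (norm (f (complex_of_real r * cis \<theta>)))\<^sup>2) integrable_on {0..2*pi} \<and>
        integral {0..2*pi} (\<lambda>\<theta>. (norm (f (complex_of_real r * cis \<theta>)))\<^sup>2) \<le> C)}"

definition mult_op :: "(complex \<Rightarrow> ('n::finite) cmat) \<Rightarrow> (complex \<Rightarrow> complex ^ ('n::finite)) \<Rightarrow> (complex \<Rightarrow> complex ^ ('n::finite))" where
  "mult_op \<psi> f = (\<lambda>z. \<psi> z *v f z)"

text \<open>equality of two operators on H^2 (elements of H^2 are functions on the disc)\<close>
definition H2_op_eq :: "((complex \<Rightarrow> complex ^ ('n::finite)) \<Rightarrow> (complex \<Rightarrow> complex ^ ('n::finite)))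
    \<Rightarrow> ((complex \<Rightarrow> complex ^ ('n::finite)) \<Rightarrow> (complex \<Rightarrow> complex ^ ('n::finite))) \<Rightarrow> bool" where
  "H2_op_eq S T \<longleftrightarrow> (\<forall>f\<in>hardy2. \<forall>z\<in>unit_disc. S f z = T f z)"

text \<open>M_{phi_t o psi_1} ... M_{phi_t o psi_n} (tuple indexed by 1..n)\<close>
definition mult_chain :: "real \<Rightarrow> (nat \<Rightarrow> complex \<Rightarrow> ('n::finite) cmat) \<Rightarrow> nat
    \<Rightarrow> (complex \<Rightarrow> complex ^ ('n::finite)) \<Rightarrow> (complex \<Rightarrow> complex ^ ('n::finite))" where
  "mult_chain t \<psi> n = foldr (\<lambda>j T. mult_op (phi_comp t (\<psi> j)) \<circ> T) [1..<Suc n] id"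

definition factorizing_tuple :: "nat \<Rightarrow> (nat \<Rightarrow> complex \<Rightarrow> ('n::finite) cmat) \<Rightarrow> bool" where
  "factorizing_tuple n \<psi> \<longleftrightarrow>
     (\<forall>j\<in>{1..n}. \<psi> j \<in> classC) \<and>
     (\<forall>j\<in>{1..n}. \<forall>k\<in>{1..n}. \<forall>t\<ge>0.
        H2_op_eq (mult_op (phi_comp t (\<psi> j)) \<circ> mult_op (phi_comp t (\<psi> k)))
                 (mult_op (phi_comp t (\<psi> k)) \<circ> mult_op (phi_comp t (\<psi> j)))) \<and>
     (\<forall>t\<ge>0. H2_op_eq (mult_chain t \<psi> n) (mult_op (phi_comp t zfun)))"

definition AB_conditions :: "nat \<Rightarrow> (nat \<Rightarrow> complex \<Rightarrow> ('n::finite) cmat) \<Rightarrow> (nat \<Rightarrow> ('n::finite) cmat) \<Rightarrow> (nat \<Rightarrow> ('n::finite) cmat) \<Rightarrow> bool" where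
  "AB_conditions n \<psi> A B \<longleftrightarrow>
     (\<forall>j\<in>{1..n}. self_adjoint (A j) \<and> positive_op (B j) \<and> contraction (B j)) \<and>
     (\<forall>j\<in>{1..n}. \<forall>k\<in>{1..n}. A j ** A k = A k ** A j \<and> B j ** B k = B k ** B j) \<and>
     (\<forall>j\<in>{1..n}. \<forall>k\<in>{1..n}. A j ** B k + B j ** A k = A k ** B j + B k ** A j) \<and>
     (\<Sum>j\<in>{1..n}. A j) = 0 \<and> (\<Sum>j\<in>{1..n}. B j) = mat 1 \<and>
     (\<forall>z\<in>unit_disc. \<forall>j\<in>{1..n}.
        (\<psi> j z + mat 1) ** matrix_inv (\<psi> j z - mat 1) = cscale \<i> (A j) + cscale (zeta z) (B j))"


end

theory Submission
  imports Defs "HOL-Complex_Analysis.Cauchy_Integral_Formula"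
begin

text \<open>Let \<open>F\<^sub>j(z)\<close> be the Cayley transform \<open>(\<psi>\<^sub>j(z) + I)(\<psi>\<^sub>j(z) - I)\<^sup>-\<^sup>1\<close>, so that
  \<open>\<phi>\<^sub>t \<circ> \<psi>\<^sub>j = exp (t F\<^sub>j)\<close>. Testing the defining identities of a factorizing tuple on
  constant functions and comparing the terms of order \<open>t\<close> and \<open>t\<^sup>2\<close> at \<open>t = 0\<close> shows that
  the \<open>F\<^sub>j(z)\<close> commute and sum to \<open>\<zeta>(z) I\<close>. Since \<open>\<psi>\<^sub>j(z)\<close> is a contraction, \<open>Re F\<^sub>j(z) \<le> 0\<close>,
  and then the sum forces \<open>Re F\<^sub>j(z) \<ge> Re \<zeta>(z)\<close>. Hence for each vector \<open>x\<close> the holomorphic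
  function \<open>-\<langle>F\<^sub>j(z)x, x\<rangle>/|x|\<^sup>2\<close> has real part squeezed between \<open>0\<close> and
  \<open>Re ((1 + z)/(1 - z))\<close>; Carath\'eodory's coefficient bound, applied to it and to its
  complement, forces it to be an affine function of \<open>(1 + z)/(1 - z)\<close>. Polarization yields
  \<open>F\<^sub>j(z) = iA\<^sub>j + \<zeta>(z)B\<^sub>j\<close>; the relations (1)--(3) follow by comparing coefficients
  in \<open>\<zeta>(z)\<close>, uniqueness because \<open>\<zeta>\<close> takes two distinct values, and the formula for
  \<open>\<psi>\<^sub>j\<close> by inverting the Cayley transform.\<close>

section \<open>Carath\'eodory's inequality\<close>

lemma circle_integral_Taylor_coeff:
  fixes h :: "complex \<Rightarrow> complex" and r :: real and k :: nat
  assumes hol: "h holomorphic_on ball 0 1" and r: "0 < r" "r < 1"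
  shows "((\<lambda>t. h (r * cis t) * cis (- (real k * t))) has_integral
            (2 * pi * ((deriv ^^ k) h 0 / fact k) * r ^ k)) {0..2*pi}"
proof -
  have sub: "cball 0 r \<subseteq> ball (0::complex) 1" using r by auto
  have cont: "continuous_on (cball 0 r) h"
    using holomorphic_on_imp_continuous_on[OF holomorphic_on_subset[OF hol sub]] .
  have holr: "h holomorphic_on ball 0 r"
    using holomorphic_on_subset[OF hol] sub ball_subset_cball by blast
  have "((\<lambda>u. h u / (u - 0) ^ (Suc k)) has_contour_integral ((2 * pi * \<i>) / (fact k) * (deriv ^^ k) h 0))
           (circlepath 0 r)"
    by (rule Cauchy_has_contour_integral_higher_derivative_circlepath[OF cont holr]) (use r in auto)
  then have I: "((\<lambda>t. h (0 + r * cis t) / (0 + r * cis t - 0) ^ Suc k * r * \<i> * cis t) has_integral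
         ((2 * pi * \<i>) / (fact k) * (deriv ^^ k) h 0)) {0..2*pi}"
    unfolding circlepath_def by (subst (asm) has_contour_integral_part_circlepath_iff) auto
  note I2 = has_integral_mult_right[OF I, of "of_real (r ^ k) / \<i>"]
  show ?thesis
  proof (rule has_integral_eq_rhs[OF has_integral_cong[THEN iffD1, OF _ I2]])
    fix t :: real
    have "cis t ^ k = cis (real k * t)" by (rule Complex.DeMoivre)
    moreover have "cis (- (real k * t)) * cis (real k * t) = 1"
      by (subst cis_mult) simp
    ultimately show "of_real (r ^ k) / \<i> * (h (0 + r * cis t) / (0 + r * cis t - 0) ^ Suc k * r * \<i> * cis t)
       = h (r * cis t) * cis (- (real k * t))"
      using r by (simp add: field_simps)
  qed (simp add: field_simps)
qed

lemma circle_integral_positive_mode_eq_0: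
  fixes h :: "complex \<Rightarrow> complex" and r :: real and k :: nat
  assumes hol: "h holomorphic_on ball 0 1" and r: "0 < r" "r < 1" and k: "k \<ge> 1"
  shows "((\<lambda>t. h (r * cis t) * cis (real k * t)) has_integral 0) {0..2*pi}"
proof -
  define g where "g = (\<lambda>w. h w * w ^ k)"
  have "((\<lambda>t. g (r * cis t) * cis (- (real 0 * t))) has_integral
            (2 * pi * ((deriv ^^ 0) g 0 / fact 0) * r ^ 0)) {0..2*pi}"
    unfolding g_def by (intro circle_integral_Taylor_coeff holomorphic_intros hol r)
  then have "((\<lambda>t. g (r * cis t)) has_integral 0) {0..2*pi}"
    using k by (simp add: g_def power_0_left)
  from has_integral_mult_right[OF this, of "1 / of_real (r ^ k)"]
  show ?thesis
    using r by (simp add: g_def Complex.DeMoivre field_simps)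
qed

text \<open>The weight \<open>1 + Re (a e\<^sup>-\<^sup>i\<^sup>k\<^sup>t)\<close> is a combination of the modes \<open>1, e\<^sup>\<plusminus>\<^sup>i\<^sup>k\<^sup>t\<close> and their conjugates,
  whose circle integrals against \<open>h\<close> are Taylor coefficients.\<close>
lemma circle_integral_Re_weighted:
  fixes h :: "complex \<Rightarrow> complex" and r :: real and k :: nat
  assumes hol: "h holomorphic_on ball 0 1" and r: "0 < r" "r < 1" and k: "k \<ge> 1"
  shows "((\<lambda>t. Re (h (r * cis t)) * (1 + Re (a * cis (- (real k * t))))) has_integral
      pi * (2 * Re (h 0) + Re (a * ((deriv ^^ k) h 0 / fact k) * r ^ k))) {0..2*pi}"
proof -
  define b where "b = (deriv ^^ k) h 0 / fact k"
  define H where "H = (\<lambda>t::real. h (r * cis t))"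
  define e where "e = (\<lambda>t::real. cis (- (real k * t)))"
  define e' where "e' = (\<lambda>t::real. cis (real k * t))"
  have Ik: "((\<lambda>t. H t * e t) has_integral (2 * pi * b * r ^ k)) {0..2*pi}"
    using circle_integral_Taylor_coeff[OF hol r, of k] unfolding H_def e_def b_def by simp
  have I0: "(H has_integral (2 * pi * h 0)) {0..2*pi}"
    using circle_integral_Taylor_coeff[OF hol r, of 0] unfolding H_def by simp
  have Zk: "((\<lambda>t. H t * e' t) has_integral 0) {0..2*pi}"
    using circle_integral_positive_mode_eq_0[OF hol r k] unfolding H_def e'_def by simp
  have cnj_integral: "((\<lambda>t. cnj (f t)) has_integral cnj I) {0..2*pi}"
    if "(f has_integral I) {0..2*pi}" for f :: "real \<Rightarrow> complex" and I
    using has_integral_cnj[THEN iffD2, OF that] by (simp only: o_def)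
  define G where "G = (\<lambda>t. (H t + cnj (H t)) / 2 + a / 4 * (H t * e t + cnj (H t * e' t))
      + cnj a / 4 * (H t * e' t + cnj (H t * e t)))"
  have "(G has_integral ((2 * pi * h 0 + cnj (2 * pi * h 0)) / 2 + a / 4 * (2 * pi * b * r ^ k + 0)
      + cnj a / 4 * (0 + cnj (2 * pi * b * r ^ k)))) {0..2*pi}"
    unfolding G_def
    by (intro has_integral_add has_integral_mult_right has_integral_divide I0 Ik Zk
        cnj_integral[OF I0] cnj_integral[OF Ik] cnj_integral[OF Zk, unfolded complex_cnj_zero])
  from has_integral_linear[OF this bounded_linear_Re]
  have "((Re \<circ> G) has_integral pi * (2 * Re (h 0) + Re (a * b * r ^ k))) {0..2*pi}"
    by (simp add: algebra_simps)
  moreover have "Re \<circ> G = (\<lambda>t. Re (H t) * (1 + Re (a * e t)))"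
  proof
    fix t
    have ce: "cnj (e t) = e' t" unfolding e_def e'_def by (simp add: cis_cnj)
    have "G t = (H t + cnj (H t)) / 2 * (1 + (a * e t + cnj (a * e t)) / 2)"
      unfolding G_def using ce[symmetric] by (simp add: algebra_simps add_divide_distrib)
    also have "\<dots> = of_real (Re (H t)) * (1 + of_real (Re (a * e t)))"
      unfolding complex_add_cnj by simp
    finally show "(Re \<circ> G) t = Re (H t) * (1 + Re (a * e t))" by simp
  qed
  ultimately show ?thesis unfolding H_def e_def b_def by simp
qed

lemma caratheodory_rotated_bound:
  fixes h :: "complex \<Rightarrow> complex" and r :: real and k :: nat
  assumes hol: "h holomorphic_on ball 0 1" and r: "0 < r" "r < 1" and k: "k \<ge> 1"
    and pos: "\<And>z. z \<in> ball 0 1 \<Longrightarrow> Re (h z) \<ge> 0" and a: "norm a = 1"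
  shows "0 \<le> 2 * Re (h 0) + Re (a * ((deriv ^^ k) h 0 / fact k) * r ^ k)"
proof -
  have "0 \<le> pi * (2 * Re (h 0) + Re (a * ((deriv ^^ k) h 0 / fact k) * r ^ k))"
  proof (rule has_integral_nonneg[OF circle_integral_Re_weighted[OF hol r k]])
    fix t :: real
    have "r * cis t \<in> ball 0 1" using r by (simp add: norm_mult)
    then have "Re (h (r * cis t)) \<ge> 0" using pos by auto
    moreover have "norm (a * cis (- (real k * t))) = 1" using a by (simp add: norm_mult)
    then have "Re (a * cis (- (real k * t))) \<ge> -1"
      using abs_Re_le_cmod[of "a * cis (- (real k * t))"] by linarith
    ultimately show "0 \<le> Re (h (r * cis t)) * (1 + Re (a * cis (- (real k * t))))" by simp
  qed
  then show ?thesis using pi_gt_zero by (simp add: zero_le_mult_iff)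
qed

lemma caratheodory_coeff_bound_circle:
  fixes h :: "complex \<Rightarrow> complex" and r :: real and k :: nat
  assumes hol: "h holomorphic_on ball 0 1" and r: "0 < r" "r < 1" and k: "k \<ge> 1"
    and pos: "\<And>z. z \<in> ball 0 1 \<Longrightarrow> Re (h z) \<ge> 0"
  shows "norm ((deriv ^^ k) h 0 / fact k) * r ^ k \<le> 2 * Re (h 0)"
proof (cases "(deriv ^^ k) h 0 / fact k = 0")
  case True
  then show ?thesis using pos[of 0] by simp
next
  case False
  define b where "b = (deriv ^^ k) h 0 / fact k"
  define a where "a = - cnj b / of_real (norm b)"
  have "norm a = 1" using False unfolding a_def b_def by (simp add: norm_divide)
  moreover have "a * b * r ^ k = - of_real (norm b * r ^ k)"
  proof -
    have "b * cnj b = of_real (norm b) * of_real (norm b)"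
      using complex_norm_square[of b] unfolding power2_eq_square of_real_mult by (rule sym)
    then show ?thesis using False unfolding a_def b_def by (simp add: field_simps)
  qed
  ultimately show ?thesis
    using caratheodory_rotated_bound[OF hol r k pos, of a] unfolding b_def by simp
qed

lemma caratheodory_coeff_bound:
  fixes h :: "complex \<Rightarrow> complex" and k :: nat
  assumes hol: "h holomorphic_on ball 0 1" and k: "k \<ge> 1"
    and pos: "\<And>z. z \<in> ball 0 1 \<Longrightarrow> Re (h z) \<ge> 0"
  shows "norm ((deriv ^^ k) h 0 / fact k) \<le> 2 * Re (h 0)"
proof -
  let ?b = "norm ((deriv ^^ k) h 0 / fact k)"
  have lim: "((\<lambda>r::real. ?b * r ^ k) \<longlongrightarrow> ?b * 1 ^ k) (at_left 1)"
    by (intro tendsto_intros)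
  have "eventually (\<lambda>r. r \<in> {0<..<1}) (at_left (1::real))"
    by (intro eventually_at_leftI[of 0]) auto
  then have "eventually (\<lambda>r. ?b * r ^ k \<le> 2 * Re (h 0)) (at_left (1::real))"
    by eventually_elim (use caratheodory_coeff_bound_circle[OF hol _ _ k pos] in auto)
  from tendsto_le[OF trivial_limit_at_left_real tendsto_const lim this]
  show ?thesis by simp
qed

lemma higher_deriv_inverse_one_minus:
  fixes z :: complex
  assumes "z \<noteq> 1"
  shows "(deriv ^^ k) (\<lambda>w. 1 / (1 - w)) z = fact k / (1 - z) ^ (Suc k)"
  using assms
proof (induction k arbitrary: z)
  case 0
  then show ?case by simp
next
  case (Suc k)
  have "eventually (\<lambda>w. w \<noteq> 1) (nhds z)"
    using Suc.prems by (intro t1_space_nhds) auto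
  then have ev: "eventually (\<lambda>w. (deriv ^^ k) (\<lambda>w. 1 / (1 - w)) w = fact k / (1 - w) ^ (Suc k)) (nhds z)"
    by eventually_elim (use Suc.IH in auto)
  have nz: "1 - z \<noteq> 0" using Suc.prems by simp
  have D: "((\<lambda>w. fact k / (1 - w) ^ (Suc k)) has_field_derivative
      - (fact k * (of_nat (Suc k) * (1 - z) ^ k * (- 1))) / ((1 - z) ^ (Suc k) * (1 - z) ^ (Suc k))) (at z)"
    by (rule derivative_eq_intros refl | use nz in simp)+
  have quot: "- (fact k * (of_nat (Suc k) * q ^ k * (- 1))) / (q ^ (Suc k) * q ^ (Suc k))
      = (fact (Suc k) :: complex) / q ^ (Suc (Suc k))" if "q \<noteq> 0" for q :: complex
  proof -
    have "q ^ (Suc k) * q ^ (Suc k) = q ^ k * q ^ (Suc (Suc k))" by (simp add: algebra_simps)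
    then show ?thesis using that by (simp add: field_simps)
  qed
  note d = D[unfolded quot[OF nz]]
  have "(deriv ^^ Suc k) (\<lambda>w. 1 / (1 - w)) z = deriv (\<lambda>w. fact k / (1 - w) ^ (Suc k)) z"
    by (simp add: deriv_cong_ev[OF ev refl])
  also have "\<dots> = fact (Suc k) / (1 - z) ^ (Suc (Suc k))"
    by (rule DERIV_imp_deriv[OF d])
  finally show ?case .
qed

text \<open>Carath\'eodory's bound for \<open>h\<close> and for \<open>(1 + z)/(1 - z) - h\<close>, whose Taylor coefficients of
  positive order are \<open>2 - b\<^sub>k\<close>, pins every such coefficient \<open>b\<^sub>k\<close> of \<open>h\<close> to \<open>2 Re h(0)\<close>.\<close>
lemma herglotz_squeeze_Taylor_coeff:
  fixes h :: "complex \<Rightarrow> complex"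
  assumes hol: "h holomorphic_on ball 0 1"
    and bnd: "\<And>z. z \<in> ball 0 1 \<Longrightarrow> 0 \<le> Re (h z) \<and> Re (h z) \<le> Re ((1 + z) / (1 - z))"
    and k: "k \<ge> 1"
  shows "(deriv ^^ k) h 0 / fact k = 2 * Re (h 0)"
proof -
  define P where "P = (\<lambda>w::complex. 2 * (1 / (1 - w)) - 1)"
  define H where "H = (\<lambda>w. P w - h w)"
  define b where "b = (deriv ^^ k) h 0 / fact k"
  have ne1: "w \<noteq> 1" if "w \<in> ball 0 1" for w :: complex using that by (auto simp: dist_norm)
  have holP: "P holomorphic_on ball 0 1"
    unfolding P_def by (intro holomorphic_intros) (use ne1 in auto)
  have holH: "H holomorphic_on ball 0 1" unfolding H_def by (intro holomorphic_intros holP hol)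
  have posH: "Re (H z) \<ge> 0" if "z \<in> ball 0 1" for z
  proof -
    have "P z = (1 + z) / (1 - z)" using ne1[OF that] unfolding P_def by (simp add: field_simps)
    then show ?thesis using bnd[OF that] unfolding H_def by simp
  qed
  have "(deriv ^^ k) P 0 = (deriv ^^ k) (\<lambda>w. 2 * (1 / (1 - w))) 0 - (deriv ^^ k) (\<lambda>w. 1) 0"
    unfolding P_def
    by (rule higher_deriv_diff[of _ "ball 0 1"]) (auto intro!: holomorphic_intros simp: ne1)
  also have "\<dots> = 2 * (deriv ^^ k) (\<lambda>w. 1 / (1 - w)) 0"
    using k ne1 by (subst higher_deriv_cmult[of _ "ball 0 1"]) (auto intro!: holomorphic_intros)
  also have "\<dots> = 2 * fact k" by (subst higher_deriv_inverse_one_minus) auto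
  finally have "(deriv ^^ k) H 0 = 2 * fact k - (deriv ^^ k) h 0"
    unfolding H_def using higher_deriv_diff[OF holP hol] by simp
  then have "(deriv ^^ k) H 0 / fact k = 2 - b"
    unfolding b_def by (simp add: field_simps)
  then have "norm (2 - b) \<le> 2 * Re (H 0)"
    using caratheodory_coeff_bound[OF holH k posH] by simp
  then have c2: "norm (2 - b) \<le> 2 - 2 * Re (h 0)" unfolding H_def P_def by simp
  have c1: "norm b \<le> 2 * Re (h 0)"
    unfolding b_def by (rule caratheodory_coeff_bound[OF hol k]) (use bnd in simp)
  have "Re (2 - b) \<le> norm (2 - b)" by (rule complex_Re_le_cmod)
  then have "Re b \<ge> 2 * Re (h 0)" using c2 by simp
  moreover have "Re b \<le> norm b" by (rule complex_Re_le_cmod)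
  ultimately have eqs: "Re b = 2 * Re (h 0)" "norm b = 2 * Re (h 0)" using c1 by linarith+
  with cmod_power2[of b] have "Im b = 0" by simp
  with eqs show ?thesis unfolding b_def by (simp add: complex_eq_iff)
qed

lemma herglotz_squeeze:
  fixes h :: "complex \<Rightarrow> complex"
  assumes hol: "h holomorphic_on ball 0 1"
    and bnd: "\<And>z. z \<in> ball 0 1 \<Longrightarrow> 0 \<le> Re (h z) \<and> Re (h z) \<le> Re ((1 + z) / (1 - z))"
  obtains \<beta> \<gamma> :: real where "0 \<le> \<beta>" "\<beta> \<le> 1"
    "\<And>z. z \<in> ball 0 1 \<Longrightarrow> h z = \<i> * of_real \<gamma> + of_real \<beta> * ((1 + z) / (1 - z))"
proof -
  define b where "b = (\<lambda>k. (deriv ^^ k) h 0 / fact k)"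
  define \<beta> where "\<beta> = Re (h 0)"
  define \<gamma> where "\<gamma> = Im (h 0)"
  have bk: "b k = 2 * \<beta>" if "k \<ge> 1" for k
    using herglotz_squeeze_Taylor_coeff[OF hol bnd that] unfolding b_def \<beta>_def .
  show ?thesis
  proof
    show "0 \<le> \<beta>" "\<beta> \<le> 1" unfolding \<beta>_def using bnd[of 0] by simp_all
  next
    fix z :: complex assume z: "z \<in> ball 0 1"
    have "(\<lambda>k. b k * z ^ k) sums h z"
      using holomorphic_power_series[OF hol z] unfolding b_def by simp
    moreover have "(\<lambda>k. b k * z ^ k) = (\<lambda>k. (2 * \<beta>) * z ^ k + (if k = 0 then h 0 - 2 * \<beta> else 0))"
    proof
      fix k show "b k * z ^ k = (2 * \<beta>) * z ^ k + (if k = 0 then h 0 - 2 * \<beta> else 0)"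
        using bk[of k] by (cases "k = 0") (auto simp: b_def)
    qed
    moreover have "(\<lambda>k. (2 * \<beta>) * z ^ k + (if k = 0 then h 0 - 2 * \<beta> else 0)) sums
        ((2 * \<beta>) * (1 / (1 - z)) + (h 0 - 2 * \<beta>))"
      using z by (intro sums_add sums_mult geometric_sums sums_single[where i=0, simplified]) simp
    ultimately have "h z = (2 * \<beta>) * (1 / (1 - z)) + (h 0 - 2 * \<beta>)"
      using sums_unique2 by metis
    moreover have "h 0 = \<i> * \<gamma> + \<beta>" unfolding \<beta>_def \<gamma>_def by (simp add: complex_eq_iff)
    moreover have "z \<noteq> 1" using z by auto
    ultimately show "h z = \<i> * \<gamma> + \<beta> * ((1 + z) / (1 - z))" by (simp add: field_simps)
  qed
qed

section \<open>Matrix algebra\<close>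

lemma mmult_nth: "(A ** B) $ i $ j = (\<Sum>k\<in>UNIV. A $ i $ k * B $ k $ j)"
  by (simp add: matrix_matrix_mult_def)

lemma mat_nth: "(mat c :: 'a::zero ^'n^'n) $ i $ j = (if i = j then c else 0)"
  by (simp add: mat_def)

lemma matrix_add_rdistrib: "((A + B) ** C) = (A ** C) + (B ** C)" for A B C :: "'a::semiring_1^'n^'n"
  by (simp add: vec_eq_iff mmult_nth distrib_right sum.distrib)

lemma matrix_diff_rdistrib: "((A - B) ** C) = (A ** C) - (B ** C)" for A B C :: "'a::ring_1^'n^'n"
  by (simp add: vec_eq_iff mmult_nth left_diff_distrib sum_subtractf)

lemma cscale_nth [simp]: "cscale c A $ i $ j = c * A $ i $ j"
  by (simp add: cscale_def)

lemma cscale_mult_left: "cscale c A ** B = cscale c (A ** B)"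
  by (simp add: vec_eq_iff mmult_nth sum_distrib_left mult.assoc)

lemma cscale_mult_right: "A ** cscale c B = cscale c (A ** B)"
  by (simp add: vec_eq_iff mmult_nth sum_distrib_left algebra_simps)

lemma cscale_cscale: "cscale a (cscale b A) = cscale (a * b) A"
  by (simp add: vec_eq_iff)

lemma cscale_add: "cscale c (A + B) = cscale c A + cscale c B"
  by (simp add: vec_eq_iff algebra_simps)

lemma cscale_diff: "cscale c (A - B) = cscale c A - cscale c B"
  by (simp add: vec_eq_iff algebra_simps)

lemma cscale_one [simp]: "cscale 1 A = A"
  by (simp add: vec_eq_iff)

lemma cscale_zero [simp]: "cscale 0 A = 0" "cscale c 0 = 0"
  by (simp_all add: vec_eq_iff)

lemma scaleR_cscale: "r *\<^sub>R A = cscale (of_real r) A" for A :: "'n::finite cmat"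
  by (simp add: vec_eq_iff) (simp add: scaleR_conv_of_real)

lemma cscale_sum: "cscale c (sum f S) = sum (\<lambda>x. cscale c (f x)) S"
  by (simp add: vec_eq_iff sum_distrib_left)

lemma cscale_mat: "cscale c (mat a :: 'n::finite cmat) = mat (c * a)"
  by (simp add: vec_eq_iff mat_nth)

lemma mat_add_mat: "(mat a :: 'n::finite cmat) + mat b = mat (a + b)"
  by (simp add: vec_eq_iff mat_nth)

lemma mat_diff_mat: "(mat a :: 'n::finite cmat) - mat b = mat (a - b)"
  by (simp add: vec_eq_iff mat_nth)

lemma mat_mult_mat: "(mat a :: 'n::finite cmat) ** mat b = mat (a * b)"
proof -
  have "(if i = k then a else 0) * (if k = j then b else 0) = (if k = i then (if i = j then a * b else 0) else 0)"
    for i j k :: 'n by auto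
  then show ?thesis by (simp add: vec_eq_iff mmult_nth mat_nth)
qed

lemma mat_mvec: "(mat c :: 'n::finite cmat) *v x = c *s x"
proof -
  have "(if i = j then c else 0) * x $ j = (if j = i then c * x $ i else 0)" for i j :: 'n by auto
  then show ?thesis by (simp add: vec_eq_iff matrix_vector_mult_def mat_nth)
qed

lemma cscale_matrix_vector_mult: "cscale c A *v x = c *s (A *v x)"
  by (simp add: vec_eq_iff matrix_vector_mult_def sum_distrib_left mult.assoc)

lemma matrix_vector_mult_smult: "M *v (c *s u) = c *s (M *v u)" for M :: "'n::finite cmat"
  by (simp add: vec_eq_iff matrix_vector_mult_def sum_distrib_left algebra_simps)

section \<open>The matrix exponential to second order\<close>

definition entry_norm :: "'n::finite cmat \<Rightarrow> real" where
  "entry_norm A = (\<Sum>i\<in>UNIV. \<Sum>j\<in>UNIV. norm (A $ i $ j))"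

lemma entry_norm_nonneg: "entry_norm A \<ge> 0"
  unfolding entry_norm_def by (intro sum_nonneg) auto

lemma entry_norm_row: "(\<Sum>j\<in>UNIV. norm (A $ i $ j)) \<le> entry_norm A"
  unfolding entry_norm_def
  by (rule member_le_sum[where f = "\<lambda>i. \<Sum>j\<in>UNIV. norm (A $ i $ j)"]) (auto intro: sum_nonneg)

lemma entry_norm_eq_0: "entry_norm A = 0 \<Longrightarrow> A = 0"
proof -
  assume "entry_norm A = 0"
  moreover have "norm (A $ i $ j) \<le> entry_norm A" for i j
    using member_le_sum[of j UNIV "\<lambda>j. norm (A $ i $ j)"] entry_norm_row[of A i] by simp
  ultimately show "A = 0" by (simp add: vec_eq_iff)
qed

lemma entry_norm_add: "entry_norm (A + B) \<le> entry_norm A + entry_norm B"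
  unfolding entry_norm_def by (simp add: sum.distrib[symmetric] sum_mono norm_triangle_ineq)

lemma entry_norm_cscale: "entry_norm (cscale c A) = norm c * entry_norm A"
  unfolding entry_norm_def by (simp add: norm_mult sum_distrib_left)

lemma entry_norm_mult: "entry_norm (A ** B) \<le> entry_norm A * entry_norm B"
proof -
  have "entry_norm (A ** B) \<le> (\<Sum>i\<in>UNIV. \<Sum>j\<in>UNIV. \<Sum>k\<in>UNIV. norm (A $ i $ k) * norm (B $ k $ j))"
    unfolding entry_norm_def mmult_nth
    by (intro sum_mono) (auto intro!: order.trans[OF norm_sum] simp: norm_mult)
  also have "\<dots> = (\<Sum>i\<in>UNIV. \<Sum>k\<in>UNIV. norm (A $ i $ k) * (\<Sum>j\<in>UNIV. norm (B $ k $ j)))"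
    by (simp add: sum_distrib_left) (rule sum.cong[OF refl], rule sum.swap)
  also have "\<dots> \<le> (\<Sum>i\<in>UNIV. \<Sum>k\<in>UNIV. norm (A $ i $ k) * entry_norm B)"
    by (intro sum_mono mult_left_mono entry_norm_row) auto
  also have "\<dots> = entry_norm A * entry_norm B"
    unfolding entry_norm_def by (simp add: sum_distrib_right)
  finally show ?thesis .
qed

lemma norm_le_entry_norm: "norm A \<le> entry_norm A"
proof -
  have "norm A \<le> (\<Sum>i\<in>UNIV. norm (A $ i))"
    unfolding norm_vec_def by (rule L2_set_le_sum) auto
  also have "\<dots> \<le> (\<Sum>i\<in>UNIV. \<Sum>j\<in>UNIV. norm (A $ i $ j))"
    unfolding norm_vec_def by (intro sum_mono L2_set_le_sum) auto
  finally show ?thesis unfolding entry_norm_def .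
qed

lemma entry_norm_sum: "entry_norm (\<Sum>k\<in>S. g k) \<le> (\<Sum>k\<in>S. entry_norm (g k))"
proof (induction S rule: infinite_finite_induct)
  case (insert x F)
  then show ?case using entry_norm_add[of "g x" "sum g F"] by simp
qed (simp_all add: entry_norm_def)

lemma entry_norm_suminf:
  assumes "summable g" "summable (\<lambda>k. entry_norm (g k))"
  shows "entry_norm (suminf g) \<le> (\<Sum>k. entry_norm (g k))"
proof (rule LIMSEQ_le_const2)
  have "continuous_on UNIV entry_norm"
    unfolding entry_norm_def by (intro continuous_intros)
  then show "(\<lambda>N. entry_norm (\<Sum>k<N. g k)) \<longlonglongrightarrow> entry_norm (suminf g)"
    by (rule continuous_on_tendsto_compose[OF _ summable_LIMSEQ[OF assms(1)]]) auto
  have "entry_norm (\<Sum>k<N. g k) \<le> (\<Sum>k. entry_norm (g k))" for N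
    using entry_norm_sum[of g "{..<N}"] sum_le_suminf[OF assms(2), of "{..<N}"]
    by (simp add: entry_norm_nonneg)
  then show "\<exists>N. \<forall>n\<ge>N. entry_norm (\<Sum>k<n. g k) \<le> (\<Sum>k. entry_norm (g k))" by blast
qed

lemma mpow_cscale: "mpow (cscale c X) k = cscale (c ^ k) (mpow X k)"
  by (induction k) (simp_all add: cscale_mult_left cscale_mult_right cscale_cscale mult.commute)

lemma entry_norm_mpow: "entry_norm (mpow X k) \<le> entry_norm (mat 1 :: 'n::finite cmat) * entry_norm X ^ k"
  for X :: "'n::finite cmat"
proof (induction k)
  case (Suc k)
  have "entry_norm (mpow X (Suc k)) \<le> entry_norm X * entry_norm (mpow X k)"
    using entry_norm_mult[of X "mpow X k"] by simp
  also have "\<dots> \<le> entry_norm X * (entry_norm (mat 1 :: 'n::finite cmat) * entry_norm X ^ k)"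
    by (rule mult_left_mono[OF Suc entry_norm_nonneg])
  finally show ?case by (simp add: algebra_simps)
qed simp

lemma summable_mexp_majorant:
  "summable (\<lambda>k. entry_norm (mat 1 :: 'n::finite cmat) * (entry_norm (X :: 'n cmat) ^ k / fact k))"
  using summable_mult[OF summable_exp[of "entry_norm X"], of "entry_norm (mat 1 :: 'n::finite cmat)"]
  by (simp add: field_simps)

lemma summable_mexp: "summable (\<lambda>k. (1 / fact k) *\<^sub>R mpow (X :: 'n::finite cmat) k)"
proof (rule summable_comparison_test[OF _ summable_mexp_majorant[of X]])
  have "entry_norm ((1 / fact k) *\<^sub>R mpow X k) \<le>
      entry_norm (mat 1 :: 'n::finite cmat) * (entry_norm X ^ k / fact k)" for k
    using mult_left_mono[OF entry_norm_mpow[of X k], of "1 / fact k"]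
    by (simp add: scaleR_cscale entry_norm_cscale norm_divide)
  then show "\<exists>N. \<forall>n\<ge>N. norm ((1 / fact n) *\<^sub>R mpow X n) \<le>
      entry_norm (mat 1 :: 'n::finite cmat) * (entry_norm X ^ n / fact n)"
    using order.trans[OF norm_le_entry_norm] by blast
qed

definition bigO :: "nat \<Rightarrow> (real \<Rightarrow> 'n::finite cmat) \<Rightarrow> bool" where
  "bigO m R \<longleftrightarrow> (\<exists>C. \<forall>t\<in>{0..1}. entry_norm (R t) \<le> C * t ^ m)"

lemma bigO_cong: "(\<And>t. t \<in> {0..1} \<Longrightarrow> A t = B t) \<Longrightarrow> bigO m A \<Longrightarrow> bigO m B"
  unfolding bigO_def by auto

lemma bigO_0: "bigO m (\<lambda>t. 0)"
  unfolding bigO_def by (intro exI[of _ 0]) (simp add: entry_norm_def)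

lemma bigO_const: "bigO 0 (\<lambda>t. A)"
  unfolding bigO_def by (intro exI[of _ "entry_norm A"]) simp

lemma bigO_cscale: "bigO 1 (\<lambda>t. cscale (of_real t) A)"
  unfolding bigO_def
  by (intro exI[of _ "entry_norm A"]) (auto simp: entry_norm_cscale)

lemma bigO_add: "bigO m A \<Longrightarrow> bigO m B \<Longrightarrow> bigO m (\<lambda>t. A t + B t)"
  unfolding bigO_def
proof (elim exE)
  fix C D assume C: "\<forall>t\<in>{0..1}. entry_norm (A t) \<le> C * t ^ m"
    and D: "\<forall>t\<in>{0..1}. entry_norm (B t) \<le> D * t ^ m"
  have "entry_norm (A t + B t) \<le> (C + D) * t ^ m" if "t \<in> {0..1}" for t
    using entry_norm_add[of "A t" "B t"] C[rule_format, OF that] D[rule_format, OF that]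
    by (simp add: algebra_simps)
  then show "\<exists>C. \<forall>t\<in>{0..1}. entry_norm (A t + B t) \<le> C * t ^ m" by blast
qed

lemma bigO_minus: "bigO m A \<Longrightarrow> bigO m (\<lambda>t. - A t)"
  unfolding bigO_def entry_norm_def by simp

lemma bigO_diff: "bigO m A \<Longrightarrow> bigO m B \<Longrightarrow> bigO m (\<lambda>t. A t - B t)"
  using bigO_add[of m A "\<lambda>t. - B t"] bigO_minus[of m B] by simp

lemma bigO_mult: "bigO a A \<Longrightarrow> bigO b B \<Longrightarrow> bigO (a + b) (\<lambda>t. A t ** B t)"
  unfolding bigO_def
proof (elim exE)
  fix C D assume C: "\<forall>t\<in>{0..1}. entry_norm (A t) \<le> C * t ^ a"
    and D: "\<forall>t\<in>{0..1}. entry_norm (B t) \<le> D * t ^ b"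
  have "entry_norm (A t ** B t) \<le> (C * D) * t ^ (a + b)" if t: "t \<in> {0..1}" for t
  proof -
    have "entry_norm (A t ** B t) \<le> entry_norm (A t) * entry_norm (B t)" by (rule entry_norm_mult)
    also have "\<dots> \<le> (C * t ^ a) * (D * t ^ b)"
      using C[rule_format, OF t] D[rule_format, OF t]
      by (intro mult_mono) (auto intro: order.trans[OF entry_norm_nonneg])
    finally show ?thesis by (simp add: power_add algebra_simps)
  qed
  then show "\<exists>C. \<forall>t\<in>{0..1}. entry_norm (A t ** B t) \<le> C * t ^ (a + b)" by blast
qed

lemma bigO_mono: "bigO m A \<Longrightarrow> k \<le> m \<Longrightarrow> bigO k A"
  unfolding bigO_def
proof (elim exE)
  fix C assume C: "\<forall>t\<in>{0..1}. entry_norm (A t) \<le> C * t ^ m" and km: "k \<le> m"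
  have "entry_norm (A t) \<le> max C 0 * t ^ k" if t: "t \<in> {0..1}" for t
  proof -
    have "C * t ^ m \<le> max C 0 * t ^ m" using t by (intro mult_right_mono) auto
    also have "\<dots> \<le> max C 0 * t ^ k" using t km by (intro mult_left_mono power_decreasing) auto
    finally show ?thesis using C[rule_format, OF t] by linarith
  qed
  then show "\<exists>C. \<forall>t\<in>{0..1}. entry_norm (A t) \<le> C * t ^ k" by blast
qed

lemma bigO_monomial_imp_zero:
  assumes "bigO (Suc m) (\<lambda>t. cscale (of_real (t ^ m)) D)"
  shows "D = 0"
proof -
  obtain C where C: "\<forall>t\<in>{0..1}. entry_norm (cscale (of_real (t ^ m)) D) \<le> C * t ^ Suc m"
    using assms unfolding bigO_def by blast
  have le: "entry_norm D \<le> C * t" if t: "0 < t" "t \<le> 1" for t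
  proof -
    have "norm (complex_of_real (t ^ m)) = t ^ m" using t by (simp add: norm_power)
    then have "t ^ m * entry_norm D \<le> t ^ m * (C * t)"
      using C[rule_format, of t] t unfolding entry_norm_cscale by (simp add: algebra_simps)
    then show ?thesis using t by (simp add: mult_le_cancel_left)
  qed
  have "entry_norm D \<le> 0"
  proof (rule ccontr)
    assume "\<not> entry_norm D \<le> 0"
    then have pos: "entry_norm D > 0" by simp
    define t where "t = min 1 (entry_norm D / (2 * (\<bar>C\<bar> + 1)))"
    have t0: "0 < t" "t \<le> 1" unfolding t_def using pos by (auto simp: min_def)
    have "C * t \<le> \<bar>C\<bar> * t" using t0 by (simp add: mult_right_mono)
    also have "\<dots> \<le> (\<bar>C\<bar> + 1) * (entry_norm D / (2 * (\<bar>C\<bar> + 1)))"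
      using t0 by (intro mult_mono) (auto simp: t_def)
    also have "\<dots> = entry_norm D / 2" by (simp add: field_simps)
    finally show False using le[OF t0] pos by linarith
  qed
  then show ?thesis using entry_norm_nonneg[of D] entry_norm_eq_0[of D] by linarith
qed

lemma entry_norm_mexp_term_le:
  fixes X :: "'n::finite cmat"
  assumes t: "0 \<le> t" "t \<le> 1" and mk: "m \<le> k"
  shows "entry_norm ((1 / fact k) *\<^sub>R mpow (cscale (of_real t) X) k)
      \<le> t ^ m * (entry_norm (mat 1 :: 'n cmat) * (entry_norm X ^ k / fact k))"
proof -
  have "norm (complex_of_real t ^ k) = t ^ k" using t by (simp add: norm_power)
  then have "entry_norm ((1 / fact k) *\<^sub>R mpow (cscale (of_real t) X) k) =
      (1 / fact k) * (t ^ k * entry_norm (mpow X k))"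
    unfolding scaleR_cscale entry_norm_cscale mpow_cscale by (simp add: norm_divide)
  also have "\<dots> \<le> (1 / fact k) * (t ^ m * (entry_norm (mat 1 :: 'n cmat) * entry_norm X ^ k))"
    using t mk power_decreasing[of m k t] entry_norm_mpow[of X k]
    by (intro mult_left_mono mult_mono) (auto simp: entry_norm_nonneg)
  finally show ?thesis by (simp add: field_simps)
qed

lemma mexp_first_order:
  fixes X :: "'n::finite cmat"
  shows "bigO 2 (\<lambda>t. mexp (cscale (of_real t) X) - (mat 1 + cscale (of_real t) X))"
proof -
  define c where "c = (\<lambda>i. entry_norm (mat 1 :: 'n cmat) * (entry_norm X ^ (i + 2) / fact (i + 2)))"
  have sumC: "summable c"
    using summable_ignore_initial_segment[OF summable_mexp_majorant[of X], of 2] unfolding c_def .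
  have "entry_norm (mexp (cscale (of_real t) X) - (mat 1 + cscale (of_real t) X)) \<le> suminf c * t ^ 2"
    if t: "t \<in> {0..1}" for t
  proof -
    define f where "f = (\<lambda>k. (1 / fact k) *\<^sub>R mpow (cscale (of_real t) X) k)"
    have "f sums mexp (cscale (of_real t) X)"
      unfolding f_def mexp_def using summable_mexp by (rule summable_sums)
    from sums_split_initial_segment[OF this, of 2]
    have s: "(\<lambda>i. f (i + 2)) sums (mexp (cscale (of_real t) X) - (mat 1 + cscale (of_real t) X))"
      by (simp add: f_def numeral_2_eq_2)
    have bnd: "entry_norm (f (i + 2)) \<le> t ^ 2 * c i" for i
      unfolding f_def c_def using t by (intro entry_norm_mexp_term_le) auto
    have sum1: "summable (\<lambda>i. entry_norm (f (i + 2)))"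
      by (rule summable_comparison_test[OF _ summable_mult[OF sumC, of "t^2"]])
         (use bnd in \<open>auto simp: entry_norm_nonneg\<close>)
    have "entry_norm (mexp (cscale (of_real t) X) - (mat 1 + cscale (of_real t) X))
        = entry_norm (\<Sum>i. f (i + 2))"
      using sums_unique[OF s] by simp
    also have "\<dots> \<le> (\<Sum>i. entry_norm (f (i + 2)))"
      by (rule entry_norm_suminf[OF sums_summable[OF s] sum1])
    also have "\<dots> \<le> (\<Sum>i. t ^ 2 * c i)"
      by (rule suminf_le[OF bnd sum1 summable_mult[OF sumC]])
    also have "\<dots> = suminf c * t ^ 2" using suminf_mult[OF sumC, of "t^2"] by simp
    finally show ?thesis .
  qed
  then show ?thesis unfolding bigO_def by blast
qed

lemma foldr_mexp_first_order:
  fixes X :: "'a \<Rightarrow> 'n::finite cmat"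
  shows "bigO 2 (\<lambda>t. foldr (\<lambda>j M. mexp (cscale (of_real t) (X j)) ** M) js (mat 1)
                    - (mat 1 + cscale (of_real t) (sum_list (map X js))))"
proof (induction js)
  case Nil
  then show ?case by (simp add: bigO_0)
next
  case (Cons j js)
  define E where "E = (\<lambda>t. mexp (cscale (of_real t) (X j)))"
  define U where "U = (\<lambda>t::real. cscale (of_real t) (X j))"
  define V where "V = (\<lambda>t::real. cscale (of_real t) (sum_list (map X js)))"
  define Q where "Q = (\<lambda>t. foldr (\<lambda>j M. mexp (cscale (of_real t) (X j)) ** M) js (mat 1) - (mat 1 + V t))"
  have RQ: "bigO 2 Q" using Cons unfolding Q_def V_def .
  have RE: "bigO 2 (\<lambda>t. E t - (mat 1 + U t))" unfolding E_def U_def by (rule mexp_first_order)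
  have bU: "bigO 1 U" unfolding U_def by (rule bigO_cscale)
  have bV: "bigO 1 V" unfolding V_def by (rule bigO_cscale)
  have "bigO 0 (\<lambda>t. (E t - (mat 1 + U t)) + (mat 1 + U t))"
    by (intro bigO_add bigO_mono[OF RE] bigO_const bigO_mono[OF bU]) auto
  then have bE: "bigO 0 E" by simp
  have "bigO 2 (\<lambda>t. (E t - (mat 1 + U t)) + U t ** V t + (E t - (mat 1 + U t)) ** V t + E t ** Q t)"
    using bigO_mult[OF bU bV] bigO_mult[OF bE RQ]
    by (intro bigO_add RE bigO_mono[OF bigO_mult[OF RE bV]]) (auto simp: numeral_2_eq_2)
  then show ?case
  proof (rule bigO_cong[rotated])
    fix t :: real
    have "A ** (mat 1 + V' + Q') - (mat 1 + (U' + V')) =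
        (A - (mat 1 + U')) + U' ** V' + (A - (mat 1 + U')) ** V' + A ** Q'" for A U' V' Q' :: "'n cmat"
      by (simp add: matrix_add_ldistrib matrix_add_rdistrib matrix_diff_rdistrib algebra_simps)
    moreover have "foldr (\<lambda>j M. mexp (cscale (of_real t) (X j)) ** M) js (mat 1) = mat 1 + V t + Q t"
      unfolding Q_def by simp
    moreover have "cscale (of_real t) (X j + sum_list (map X js)) = U t + V t"
      unfolding U_def V_def by (simp add: cscale_add)
    ultimately show "E t - (mat 1 + U t) + U t ** V t + (E t - (mat 1 + U t)) ** V t + E t ** Q t =
      foldr (\<lambda>j M. mexp (cscale (of_real t) (X j)) ** M) (j # js) (mat 1) -
      (mat 1 + cscale (of_real t) (sum_list (map X (j # js))))"
      unfolding E_def by simp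
  qed
qed

text \<open>Compare the terms of order \<open>t\<close> at \<open>t = 0\<close>.\<close>
lemma sum_list_eq_if_foldr_mexp_eq:
  fixes X :: "'a \<Rightarrow> 'n::finite cmat"
  assumes "\<And>t. t \<in> {0..1} \<Longrightarrow>
     foldr (\<lambda>j M. mexp (cscale (of_real t) (X j)) ** M) js (mat 1) = mexp (cscale (of_real t) Z)"
  shows "sum_list (map X js) = Z"
proof -
  have "bigO 2 (\<lambda>t. (mexp (cscale (of_real t) Z) - (mat 1 + cscale (of_real t) Z))
     - (foldr (\<lambda>j M. mexp (cscale (of_real t) (X j)) ** M) js (mat 1)
                    - (mat 1 + cscale (of_real t) (sum_list (map X js)))))"
    by (intro bigO_diff mexp_first_order foldr_mexp_first_order)
  then have "bigO 2 (\<lambda>t. cscale (of_real (t ^ 1)) (sum_list (map X js) - Z))"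
    by (rule bigO_cong[rotated]) (simp add: assms cscale_diff)
  then have "sum_list (map X js) - Z = 0"
    by (intro bigO_monomial_imp_zero[of 1]) (simp add: numeral_2_eq_2)
  then show ?thesis by simp
qed

text \<open>The second order terms of \<open>e\<^sup>t\<^sup>X e\<^sup>t\<^sup>Y = e\<^sup>t\<^sup>Y e\<^sup>t\<^sup>X\<close> give \<open>t\<^sup>2 (XY - YX) = O(t\<^sup>3)\<close>.\<close>
lemma commute_if_mexp_commute:
  fixes X Y :: "'n::finite cmat"
  assumes "\<And>t. t \<in> {0..1} \<Longrightarrow>
     mexp (cscale (of_real t) X) ** mexp (cscale (of_real t) Y) =
     mexp (cscale (of_real t) Y) ** mexp (cscale (of_real t) X)"
  shows "X ** Y = Y ** X"
proof -
  define U where "U = (\<lambda>t::real. cscale (of_real t) X)"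
  define V where "V = (\<lambda>t::real. cscale (of_real t) Y)"
  define P where "P = (\<lambda>t. mexp (U t) - (mat 1 + U t))"
  define Q where "Q = (\<lambda>t. mexp (V t) - (mat 1 + V t))"
  have bP: "bigO 2 P" unfolding P_def U_def by (rule mexp_first_order)
  have bQ: "bigO 2 Q" unfolding Q_def V_def by (rule mexp_first_order)
  have bU: "bigO 1 U" unfolding U_def by (rule bigO_cscale)
  have bV: "bigO 1 V" unfolding V_def by (rule bigO_cscale)
  have "bigO 3 (\<lambda>t. U t ** Q t + P t ** V t + P t ** Q t - V t ** P t - Q t ** U t - Q t ** P t)"
    using bigO_mult[OF bU bQ] bigO_mult[OF bP bV] bigO_mult[OF bV bP] bigO_mult[OF bQ bU]
    by (intro bigO_diff bigO_add bigO_mono[OF bigO_mult[OF bP bQ]] bigO_mono[OF bigO_mult[OF bQ bP]])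
      (auto simp: numeral_3_eq_3)
  then have "bigO 3 (\<lambda>t. cscale (of_real (t ^ 2)) (Y ** X - X ** Y))"
  proof (rule bigO_cong[rotated])
    fix t :: real assume t: "t \<in> {0..1}"
    have "(mat 1 + U t + P t) ** (mat 1 + V t + Q t) = (mat 1 + V t + Q t) ** (mat 1 + U t + P t)"
      using assms[OF t] unfolding P_def Q_def U_def V_def by simp
    then have "(U t ** V t - V t ** U t) +
        (U t ** Q t + P t ** V t + P t ** Q t - V t ** P t - Q t ** U t - Q t ** P t) = 0"
      by (simp add: matrix_add_ldistrib matrix_add_rdistrib algebra_simps)
    then have "U t ** Q t + P t ** V t + P t ** Q t - V t ** P t - Q t ** U t - Q t ** P t =
        - (U t ** V t - V t ** U t)"
      by (simp only: add_eq_0_iff)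
    also have "\<dots> = cscale (of_real (t ^ 2)) (Y ** X - X ** Y)"
      unfolding U_def V_def
      by (simp add: cscale_mult_left cscale_mult_right cscale_cscale cscale_diff power2_eq_square)
    finally show "U t ** Q t + P t ** V t + P t ** Q t - V t ** P t - Q t ** U t - Q t ** P t =
        cscale (of_real (t ^ 2)) (Y ** X - X ** Y)" .
  qed
  then have "Y ** X - X ** Y = 0"
    by (intro bigO_monomial_imp_zero[of 2]) (simp add: numeral_3_eq_3)
  then show ?thesis by simp
qed

section \<open>Inverses and holomorphic matrix functions\<close>

lemma invertible_if_ker_trivial:
  fixes A :: "'n::finite cmat"
  assumes "\<And>x. A *v x = 0 \<Longrightarrow> x = 0"
  shows "invertible A"
proof -
  have "inj ((*v) A)"
  proof (rule injI)
    fix x y assume "A *v x = A *v y"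
    then have "A *v (x - y) = 0" by (simp add: matrix_vector_mult_diff_distrib)
    then show "x = y" using assms[of "x - y"] by simp
  qed
  then have "det (matrix ((*v) A)) \<noteq> 0"
    using det_nz_iff_inj_gen[OF matrix_vector_mul_linear_gen] by blast
  then show ?thesis using invertible_det_nz by (metis matrix_of_matrix_vector_mul)
qed

lemma matrix_inv_right: "invertible A \<Longrightarrow> A ** matrix_inv A = mat 1"
  and matrix_inv_left: "invertible A \<Longrightarrow> matrix_inv A ** A = mat 1"
  for A :: "'a::semiring_1^'n^'n"
  unfolding invertible_def matrix_inv_def by (metis (mono_tags, lifting) someI)+

lemma matrix_inv_unique:
  fixes A B :: "'a::semiring_1^'n^'n"
  assumes "A ** B = mat 1" "B ** A = mat 1"
  shows "matrix_inv A = B"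
proof -
  have inv: "invertible A" using assms unfolding invertible_def by blast
  have "matrix_inv A = matrix_inv A ** (A ** B)" by (simp add: assms)
  also have "\<dots> = (matrix_inv A ** A) ** B" by (simp add: matrix_mul_assoc)
  also have "\<dots> = B" by (simp add: matrix_inv_left[OF inv])
  finally show ?thesis .
qed

lemma matrix_inv_nth_cramer:
  fixes A :: "'n::finite cmat"
  assumes inv: "invertible A"
  shows "matrix_inv A $ k $ j = det (\<chi> i l. if l = k then (if i = j then 1 else 0) else A $ i $ l) / det A"
proof -
  have d: "det A \<noteq> 0" using inv invertible_det_nz by blast
  define x where "x = (\<chi> k. matrix_inv A $ k $ j)"
  define b :: "complex ^'n" where "b = (\<chi> i. if i = j then 1 else 0)"
  have "(A *v x) $ i = (A ** matrix_inv A) $ i $ j" for i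
    unfolding x_def by (simp add: matrix_vector_mult_def mmult_nth)
  then have "A *v x = b"
    unfolding matrix_inv_right[OF inv] b_def by (simp add: vec_eq_iff mat_nth)
  then have "x $ k = det (\<chi> i l. if l = k then b $ i else A $ i $ l) / det A"
    using cramer[OF d] by simp
  moreover have "(\<chi> i l. if l = k then b $ i else A $ i $ l) =
      (\<chi> i l. if l = k then (if i = j then 1 else 0) else A $ i $ l)"
    by (simp add: vec_eq_iff b_def)
  ultimately show ?thesis unfolding x_def by simp
qed

definition mat_holomorphic_on :: "(complex \<Rightarrow> 'n::finite cmat) \<Rightarrow> complex set \<Rightarrow> bool" where
  "mat_holomorphic_on M S \<longleftrightarrow> (\<forall>i j. (\<lambda>z. M z $ i $ j) holomorphic_on S)"

lemma mat_holomorphic_on_add: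
  "mat_holomorphic_on M S \<Longrightarrow> mat_holomorphic_on N S \<Longrightarrow> mat_holomorphic_on (\<lambda>z. M z + N z) S"
  unfolding mat_holomorphic_on_def by (auto intro!: holomorphic_intros)

lemma mat_holomorphic_on_diff:
  "mat_holomorphic_on M S \<Longrightarrow> mat_holomorphic_on N S \<Longrightarrow> mat_holomorphic_on (\<lambda>z. M z - N z) S"
  unfolding mat_holomorphic_on_def by (auto intro!: holomorphic_intros)

lemma mat_holomorphic_on_const: "mat_holomorphic_on (\<lambda>z. A) S"
  unfolding mat_holomorphic_on_def by (auto intro!: holomorphic_intros)

lemma mat_holomorphic_on_mult:
  "mat_holomorphic_on M S \<Longrightarrow> mat_holomorphic_on N S \<Longrightarrow> mat_holomorphic_on (\<lambda>z. M z ** N z) S"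
  unfolding mat_holomorphic_on_def mmult_nth by (auto intro!: holomorphic_intros)

lemma holomorphic_on_det: "mat_holomorphic_on M S \<Longrightarrow> (\<lambda>z. det (M z)) holomorphic_on S"
  unfolding mat_holomorphic_on_def det_def by (auto intro!: holomorphic_intros)

lemma mat_holomorphic_on_matrix_inv:
  assumes hol: "mat_holomorphic_on M S" and inv: "\<And>z. z \<in> S \<Longrightarrow> invertible (M z)"
  shows "mat_holomorphic_on (\<lambda>z. matrix_inv (M z)) S"
  unfolding mat_holomorphic_on_def
proof (intro allI)
  fix k j
  have "mat_holomorphic_on (\<lambda>z. \<chi> i l. if l = k then (if i = j then 1 else 0) else M z $ i $ l) S"
    unfolding mat_holomorphic_on_def
  proof (intro allI)
    fix i l
    show "(\<lambda>z. (\<chi> i l. if l = k then (if i = j then 1 else 0) else M z $ i $ l) $ i $ l) holomorphic_on S"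
      using hol unfolding mat_holomorphic_on_def by (cases "l = k") (auto intro!: holomorphic_intros)
  qed
  then have "(\<lambda>z. det (\<chi> i l. if l = k then (if i = j then 1 else 0) else M z $ i $ l) / det (M z))
      holomorphic_on S"
    using inv invertible_det_nz
    by (intro holomorphic_on_divide holomorphic_on_det hol) auto
  then show "(\<lambda>z. matrix_inv (M z) $ k $ j) holomorphic_on S"
    by (rule holomorphic_cong[THEN iffD1, rotated 2]) (auto simp: matrix_inv_nth_cramer inv)
qed

section \<open>Quadratic forms\<close>

lemma cinner_add_left: "cinner (x + y) z = cinner x z + cinner y z"
  unfolding cinner_def by (simp add: distrib_right sum.distrib)

lemma cinner_add_right: "cinner x (y + z) = cinner x y + cinner x z"
  unfolding cinner_def by (simp add: distrib_left sum.distrib)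

lemma cinner_diff_left: "cinner (x - y) z = cinner x z - cinner y z"
  unfolding cinner_def by (simp add: left_diff_distrib sum_subtractf)

lemma cinner_diff_right: "cinner x (y - z) = cinner x y - cinner x z"
  unfolding cinner_def by (simp add: right_diff_distrib sum_subtractf)

lemma cinner_scale_left: "cinner (c *s x) y = c * cinner x y"
  unfolding cinner_def by (simp add: sum_distrib_left mult.assoc)

lemma cinner_scale_right: "cinner x (c *s y) = cnj c * cinner x y"
  unfolding cinner_def by (simp add: sum_distrib_left algebra_simps)

lemma cinner_zero_left [simp]: "cinner 0 y = 0"
  unfolding cinner_def by simp

lemma cinner_cnj: "cnj (cinner x y) = cinner y x"
  unfolding cinner_def by (simp add: mult.commute)

lemma cinner_self: "cinner x x = of_real ((norm x)\<^sup>2)"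
proof -
  have "x $ i * cnj (x $ i) = of_real ((norm (x $ i))\<^sup>2)" for i by (rule complex_norm_square[symmetric])
  then have "cinner x x = of_real (\<Sum>i\<in>UNIV. (norm (x $ i))\<^sup>2)"
    unfolding cinner_def by simp
  also have "(\<Sum>i\<in>UNIV. (norm (x $ i))\<^sup>2) = (norm x)\<^sup>2"
    unfolding norm_vec_def L2_set_def by (simp add: sum_nonneg)
  finally show ?thesis .
qed

lemma cinner_adjoint: "cinner (A *v x) y = cinner x (adjoint_mat A *v y)"
proof -
  have "cinner (A *v x) y = (\<Sum>i\<in>UNIV. \<Sum>j\<in>UNIV. A $ i $ j * x $ j * cnj (y $ i))"
    unfolding cinner_def matrix_vector_mult_def by (simp add: sum_distrib_right)
  also have "\<dots> = (\<Sum>j\<in>UNIV. \<Sum>i\<in>UNIV. A $ i $ j * x $ j * cnj (y $ i))" by (rule sum.swap)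
  also have "\<dots> = cinner x (adjoint_mat A *v y)"
    unfolding cinner_def matrix_vector_mult_def adjoint_mat_def
    by (simp add: sum_distrib_left algebra_simps)
  finally show ?thesis .
qed

lemma adjoint_adjoint [simp]: "adjoint_mat (adjoint_mat A) = A"
  by (simp add: adjoint_mat_def vec_eq_iff)

lemma quadratic_form_cscale: "cinner (cscale c M *v x) x = c * cinner (M *v x) x"
  by (simp add: cscale_matrix_vector_mult cinner_scale_left)

lemma quadratic_form_add: "cinner ((M + N) *v x) x = cinner (M *v x) x + cinner (N *v x) x"
  for M N :: "'n::finite cmat"
  by (simp add: matrix_vector_mult_add_rdistrib cinner_add_left)

lemma quadratic_form_diff: "cinner ((M - N) *v x) x = cinner (M *v x) x - cinner (N *v x) x"
  for M N :: "'n::finite cmat"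
  by (simp add: matrix_vector_mult_diff_rdistrib cinner_diff_left)

lemma quadratic_form_sum:
  "cinner ((\<Sum>j\<in>S. M j) *v x) x = (\<Sum>j\<in>S. cinner (M j *v x) x)" for M :: "'a \<Rightarrow> 'n::finite cmat"
proof (induction S rule: infinite_finite_induct)
  case (insert a F)
  then show ?case by (simp add: quadratic_form_add)
qed (simp_all add: matrix_vector_mult_def cinner_def)

lemma quadratic_form_holomorphic_on:
  "mat_holomorphic_on F S \<Longrightarrow> (\<lambda>z. cinner (F z *v x) x) holomorphic_on S"
  unfolding mat_holomorphic_on_def cinner_def matrix_vector_mult_def
  by (auto intro!: holomorphic_intros)

text \<open>Polarization with \<open>u + v\<close> and \<open>u + iv\<close>; the statement fails over \<open>\<real>\<close>.\<close>
lemma quadratic_form_eq_0_imp_zero: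
  fixes M :: "'n::finite cmat"
  assumes q: "\<And>x. cinner (M *v x) x = 0"
  shows "M = 0"
proof -
  define B where "B = (\<lambda>u v. cinner (M *v u) v)"
  have Badd: "B (u + v) (u + v) = B u u + B u v + B v u + B v v" for u v
    unfolding B_def by (simp add: matrix_vector_right_distrib cinner_add_left cinner_add_right)
  have Bsc1: "B (c *s u) v = c * B u v" for c u v
    unfolding B_def by (simp add: cinner_scale_left matrix_vector_mult_smult)
  have Bsc2: "B u (c *s v) = cnj c * B u v" for c u v
    unfolding B_def by (simp add: cinner_scale_right)
  have ax: "B (axis a 1) (axis b 1) = M $ b $ a" for a b
    unfolding B_def cinner_def matrix_vector_mult_def axis_def by (simp add: if_distrib cong: if_cong)
  have q': "B x x = 0" for x unfolding B_def by (rule q)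
  have "M $ i $ j = 0" for i j
  proof -
    let ?u = "axis j 1 :: complex^'n" and ?v = "axis i 1 :: complex^'n"
    have e1: "B ?u ?v + B ?v ?u = 0" using Badd[of ?u ?v] q'[of ?u] q'[of ?v] q'[of "?u + ?v"] by simp
    have "B ?u (\<i> *s ?v) + B (\<i> *s ?v) ?u = 0"
      using Badd[of ?u "\<i> *s ?v"] q'[of ?u] q'[of "\<i> *s ?v"] q'[of "?u + \<i> *s ?v"] by simp
    then have "- \<i> * B ?u ?v + \<i> * B ?v ?u = 0" unfolding Bsc1 Bsc2 by simp
    with e1 have "B ?u ?v = 0" by (simp add: algebra_simps)
    then show ?thesis unfolding ax .
  qed
  then show ?thesis by (simp add: vec_eq_iff)
qed

lemma self_adjoint_if_quadratic_form_real:
  fixes A :: "'n::finite cmat"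
  assumes "\<And>x. Im (cinner (A *v x) x) = 0"
  shows "self_adjoint A"
proof -
  have "cinner ((A - adjoint_mat A) *v x) x = 0" for x
  proof -
    have "cinner (adjoint_mat A *v x) x = cinner x (A *v x)"
      using cinner_adjoint[of "adjoint_mat A" x x] by simp
    also have "\<dots> = cnj (cinner (A *v x) x)" by (simp add: cinner_cnj)
    also have "\<dots> = cinner (A *v x) x" using assms[of x] by (simp add: complex_eq_iff)
    finally show ?thesis by (simp add: quadratic_form_diff)
  qed
  then have "A - adjoint_mat A = 0" by (rule quadratic_form_eq_0_imp_zero)
  then show ?thesis unfolding self_adjoint_def by simp
qed

lemma le_mult_if_quadratic_nonneg:
  fixes a b m :: real
  assumes key: "\<And>r. 0 \<le> a - 2 * r * m + r\<^sup>2 * m * b" and b: "0 \<le> b"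
  shows "m \<le> a * b"
proof (cases "b = 0")
  case True
  have "m \<le> 0"
  proof (rule ccontr)
    assume "\<not> m \<le> 0"
    then have "a - 2 * ((a + 1) / (2 * m)) * m \<ge> 0" "m > 0"
      using key[of "(a + 1) / (2 * m)"] True by simp_all
    then show False by simp
  qed
  then show ?thesis using True by simp
next
  case False
  with b have "b > 0" by simp
  with key[of "1 / b"] show ?thesis by (simp add: power2_eq_square field_simps)
qed

lemma cauchy_schwarz_positive_form:
  fixes B :: "'n::finite cmat"
  assumes sa: "self_adjoint B" and pos: "\<And>x. Re (cinner (B *v x) x) \<ge> 0"
  shows "(norm (cinner (B *v x) y))\<^sup>2 \<le> Re (cinner (B *v x) x) * Re (cinner (B *v y) y)"
proof -
  define s where "s = cinner (B *v x) y"
  define a where "a = Re (cinner (B *v x) x)"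
  define b where "b = Re (cinner (B *v y) y)"
  define m where "m = (norm s)\<^sup>2"
  have syx: "cinner (B *v y) x = cnj s"
    unfolding s_def using cinner_adjoint[of B y x] sa by (simp add: cinner_cnj self_adjoint_def)
  have key: "a - 2 * r * m + r\<^sup>2 * m * b \<ge> 0" for r :: real
  proof -
    define c where "c = - (of_real r * s)"
    have sc: "s * cnj s = of_real m" unfolding m_def by (rule complex_norm_square[symmetric])
    have "cnj c * s = - of_real (r * m)" "c * cnj s = - of_real (r * m)"
      "c * cnj c = of_real (r\<^sup>2 * m)"
    proof -
      have "cnj c * s = - (of_real r * (s * cnj s))" "c * cnj s = - (of_real r * (s * cnj s))"
        "c * cnj c = of_real r * of_real r * (s * cnj s)"
        unfolding c_def by (simp_all add: algebra_simps)
      then show "cnj c * s = - of_real (r * m)" "c * cnj s = - of_real (r * m)"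
        "c * cnj c = of_real (r\<^sup>2 * m)"
        unfolding sc by (simp_all add: power2_eq_square)
    qed
    moreover have "cinner (B *v (x + c *s y)) (x + c *s y) =
        cinner (B *v x) x + cnj c * s + c * cnj s + c * cnj c * cinner (B *v y) y"
      by (simp only: matrix_vector_right_distrib matrix_vector_mult_smult cinner_add_left cinner_add_right
          cinner_scale_left cinner_scale_right syx s_def[symmetric]) (simp add: algebra_simps)
    ultimately have "Re (cinner (B *v (x + c *s y)) (x + c *s y)) = a - 2 * r * m + r\<^sup>2 * m * b"
      unfolding a_def b_def by simp
    then show ?thesis using pos[of "x + c *s y"] by simp
  qed
  have "b \<ge> 0" unfolding b_def by (rule pos)
  with key have "m \<le> a * b" by (rule le_mult_if_quadratic_nonneg)
  then show ?thesis unfolding m_def s_def a_def b_def .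
qed

lemma contraction_if_quadratic_form_le:
  fixes B :: "'n::finite cmat"
  assumes sa: "self_adjoint B" and pos: "\<And>x. Re (cinner (B *v x) x) \<ge> 0"
    and le: "\<And>x. Re (cinner (B *v x) x) \<le> (norm x)\<^sup>2"
  shows "contraction B"
  unfolding contraction_def op_norm_def
proof (rule onorm_le)
  fix x
  let ?y = "B *v x"
  have "norm (cinner (B *v x) ?y) = (norm ?y)\<^sup>2" unfolding cinner_self by (simp add: norm_power)
  then have "(norm ?y)\<^sup>2 * (norm ?y)\<^sup>2 = (norm (cinner (B *v x) ?y))\<^sup>2"
    by (simp add: power2_eq_square)
  also have "\<dots> \<le> Re (cinner (B *v x) x) * Re (cinner (B *v ?y) ?y)"
    by (rule cauchy_schwarz_positive_form[OF sa pos])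
  also have "\<dots> \<le> (norm x)\<^sup>2 * (norm ?y)\<^sup>2"
    by (intro mult_mono le pos) auto
  finally have *: "(norm ?y)\<^sup>2 * (norm ?y)\<^sup>2 \<le> (norm x)\<^sup>2 * (norm ?y)\<^sup>2" .
  have "(norm ?y)\<^sup>2 \<le> (norm x)\<^sup>2"
  proof (cases "norm ?y = 0")
    case False
    then have "(norm ?y)\<^sup>2 > 0" by simp
    from mult_right_le_imp_le[OF * this] show ?thesis .
  qed simp
  then show "norm (B *v x) \<le> 1 * norm x" by (simp add: power2_le_iff_abs_le)
qed

section \<open>The Cayley transform\<close>

definition cayley :: "'n::finite cmat \<Rightarrow> 'n cmat" where
  "cayley P = (P + mat 1) ** matrix_inv (P - mat 1)"

lemma phi_op_eq_mexp_cayley: "phi_op t P = mexp (cscale (of_real t) (cayley P))"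
  by (simp add: phi_op_def cayley_def)

lemma zeta_0 [simp]: "zeta 0 = -1"
  and zeta_half [simp]: "zeta (1/2) = -3"
  and zeta_neg_half [simp]: "zeta (-1/2) = -1/3"
  by (simp_all add: zeta_def field_simps)

lemma zeta_eq_on_disc:
  assumes "z \<in> ball 0 1"
  shows "zeta z = - ((1 + z) / (1 - z))"
proof -
  have "z \<noteq> 1" using assms by auto
  then show ?thesis by (simp add: zeta_def field_simps)
qed

lemma cayley_mat: "z \<noteq> 1 \<Longrightarrow> cayley (mat z :: 'n::finite cmat) = mat (zeta z)"
proof -
  assume "z \<noteq> 1"
  then have "matrix_inv (mat z - mat 1 :: 'n cmat) = mat (1 / (z - 1))"
    unfolding mat_diff_mat by (intro matrix_inv_unique) (simp_all add: mat_mult_mat)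
  then show ?thesis by (simp add: cayley_def mat_add_mat mat_mult_mat zeta_def)
qed

lemma cayley_cayley:
  fixes P :: "'n::finite cmat"
  assumes inv: "invertible (P - mat 1)"
  shows "cayley (cayley P) = P"
proof -
  define V where "V = matrix_inv (P - mat 1)"
  have PV: "(P - mat 1) ** V = mat 1" "V ** (P - mat 1) = mat 1"
    unfolding V_def using matrix_inv_right[OF inv] matrix_inv_left[OF inv] by auto
  have "cayley P - mat 1 = (P + mat 1) ** V - (P - mat 1) ** V"
    unfolding cayley_def V_def PV[unfolded V_def] ..
  also have "\<dots> = ((P + mat 1) - (P - mat 1)) ** V" by (rule matrix_diff_rdistrib[symmetric])
  also have "(P + mat 1) - (P - mat 1) = cscale 2 (mat 1 :: 'n cmat)" by (simp add: vec_eq_iff)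
  finally have minus: "cayley P - mat 1 = cscale 2 V" by (simp add: cscale_mult_left)
  have "cayley P + mat 1 = (P + mat 1) ** V + (P - mat 1) ** V"
    unfolding cayley_def V_def PV[unfolded V_def] ..
  also have "\<dots> = ((P + mat 1) + (P - mat 1)) ** V" by (rule matrix_add_rdistrib[symmetric])
  also have "(P + mat 1) + (P - mat 1) = cscale 2 P" by (simp add: vec_eq_iff)
  finally have plus: "cayley P + mat 1 = cscale 2 (P ** V)" by (simp add: cscale_mult_left)
  have "matrix_inv (cayley P - mat 1) = cscale (1/2) (P - mat 1)"
    unfolding minus
    by (intro matrix_inv_unique) (simp_all add: cscale_mult_left cscale_mult_right cscale_cscale PV)
  then have "cayley (cayley P) = cscale 2 (P ** V) ** cscale (1/2) (P - mat 1)"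
    by (simp only: cayley_def[of "cayley P"] plus)
  also have "\<dots> = P ** (V ** (P - mat 1))"
    by (simp add: cscale_mult_left cscale_mult_right cscale_cscale matrix_mul_assoc)
  finally show ?thesis by (simp add: PV)
qed

text \<open>With \<open>y = (P - I)\<^sup>-\<^sup>1 x\<close>, the real part of \<open>\<langle>cayley P x, x\<rangle> = \<langle>Py + y, Py - y\<rangle>\<close> is
  \<open>|Py|\<^sup>2 - |y|\<^sup>2\<close>.\<close>
lemma cayley_dissipative:
  fixes P :: "'n::finite cmat"
  assumes nrm: "op_norm P \<le> 1" and inv: "invertible (P - mat 1)"
  shows "Re (cinner (cayley P *v x) x) \<le> 0"
proof -
  define y where "y = matrix_inv (P - mat 1) *v x"
  have "x = ((P - mat 1) ** matrix_inv (P - mat 1)) *v x" using matrix_inv_right[OF inv] by simp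
  also have "\<dots> = (P - mat 1) *v y" unfolding y_def by (simp add: matrix_vector_mul_assoc)
  also have "\<dots> = P *v y - y" by (simp add: matrix_vector_mult_diff_rdistrib)
  finally have x: "x = P *v y - y" .
  have Fx: "cayley P *v x = P *v y + y"
    unfolding y_def cayley_def by (simp add: matrix_vector_mul_assoc[symmetric] matrix_vector_mult_add_rdistrib)
  have "Re (cinner (P *v y) y) = Re (cinner y (P *v y))"
    using arg_cong[OF cinner_cnj[of "P *v y" y], of Re] by simp
  then have "Re (cinner (P *v y + y) (P *v y - y)) = (norm (P *v y))\<^sup>2 - (norm y)\<^sup>2"
    by (simp add: cinner_add_left cinner_diff_right cinner_self)
  moreover have "norm (P *v y) \<le> onorm ((*v) P) * norm y"
    by (rule onorm[OF matrix_vector_mul_bounded_linear])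
  then have "norm (P *v y) \<le> norm y"
    using nrm mult_right_mono[of "onorm ((*v) P)" 1 "norm y"] unfolding op_norm_def by simp
  then have "(norm (P *v y))\<^sup>2 \<le> (norm y)\<^sup>2" by (simp add: power_mono)
  ultimately show ?thesis using Fx x by simp
qed

section \<open>Operator pencils \<open>iA + \<zeta>(z)B\<close>\<close>

text \<open>The coefficients of a pencil \<open>F z = iA + \<zeta>(z) B\<close> are read off from its values at \<open>0\<close> and
  \<open>1/2\<close>, where \<open>\<zeta>\<close> takes the values \<open>-1\<close> and \<open>-3\<close>.\<close>
definition pencil_B :: "(complex \<Rightarrow> 'n::finite cmat) \<Rightarrow> 'n cmat" where
  "pencil_B F = cscale (-1/2) (F (1/2) - F 0)"

definition pencil_A :: "(complex \<Rightarrow> 'n::finite cmat) \<Rightarrow> 'n cmat" where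
  "pencil_A F = cscale (-\<i>) (F 0 + pencil_B F)"

lemma pencil_coeffs:
  assumes "\<And>z. z \<in> ball 0 1 \<Longrightarrow> F z = cscale \<i> A + cscale (zeta z) B"
  shows "pencil_A F = A" "pencil_B F = B"
proof -
  have F0: "F 0 = cscale \<i> A + cscale (-1) B" and F1: "F (1/2) = cscale \<i> A + cscale (-3) B"
    using assms[of 0] assms[of "1/2"] by (simp_all add: norm_divide)
  show B: "pencil_B F = B"
    unfolding pencil_B_def F0 F1 by (simp add: vec_eq_iff algebra_simps)
  show "pencil_A F = A"
    unfolding pencil_A_def B F0 by (simp add: vec_eq_iff algebra_simps)
qed

lemma pencil_A_sum: "pencil_A (\<lambda>z. \<Sum>j\<in>S. F j z) = (\<Sum>j\<in>S. pencil_A (F j))"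
  and pencil_B_sum: "pencil_B (\<lambda>z. \<Sum>j\<in>S. F j z) = (\<Sum>j\<in>S. pencil_B (F j))"
  by (simp_all add: pencil_A_def pencil_B_def cscale_sum cscale_diff cscale_add sum.distrib sum_subtractf)

lemma quadratic_form_pencil:
  fixes F :: "complex \<Rightarrow> 'n::finite cmat"
  assumes hol: "mat_holomorphic_on F (ball 0 1)"
    and lo: "\<And>z. z \<in> ball 0 1 \<Longrightarrow> Re (zeta z) * (norm x)\<^sup>2 \<le> Re (cinner (F z *v x) x)"
    and up: "\<And>z. z \<in> ball 0 1 \<Longrightarrow> Re (cinner (F z *v x) x) \<le> 0"
  shows "\<exists>a b::real. 0 \<le> b \<and> b \<le> (norm x)\<^sup>2 \<and>
            (\<forall>z\<in>ball 0 1. cinner (F z *v x) x = \<i> * of_real a + of_real b * zeta z)"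
proof (cases "x = 0")
  case True
  then show ?thesis by (intro exI[of _ 0]) simp
next
  case False
  define n2 where "n2 = (norm x)\<^sup>2"
  have n2: "n2 > 0" unfolding n2_def using False by simp
  define h where "h = (\<lambda>z. - cinner (F z *v x) x / of_real n2)"
  have holh: "h holomorphic_on ball 0 1"
    unfolding h_def using n2 by (intro holomorphic_intros quadratic_form_holomorphic_on[OF hol]) auto
  have "0 \<le> Re (h z) \<and> Re (h z) \<le> Re ((1 + z) / (1 - z))" if z: "z \<in> ball 0 1" for z
  proof -
    have r: "Re (h z) = - Re (cinner (F z *v x) x) / n2" unfolding h_def by simp
    have "Re (zeta z) * n2 \<le> Re (cinner (F z *v x) x)" unfolding n2_def by (rule lo[OF z])
    then have "- Re (cinner (F z *v x) x) / n2 \<le> Re ((1 + z) / (1 - z))"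
      using n2 zeta_eq_on_disc[OF z] by (simp add: field_simps)
    then show ?thesis using up[OF z] n2 unfolding r by (simp add: divide_nonpos_pos)
  qed
  then obtain \<beta> \<gamma> :: real where bg: "0 \<le> \<beta>" "\<beta> \<le> 1"
    and eq: "\<And>z. z \<in> ball 0 1 \<Longrightarrow> h z = \<i> * of_real \<gamma> + of_real \<beta> * ((1 + z) / (1 - z))"
    using herglotz_squeeze[OF holh] by metis
  have "cinner (F z *v x) x = \<i> * of_real (- n2 * \<gamma>) + of_real (n2 * \<beta>) * zeta z"
    if z: "z \<in> ball 0 1" for z
  proof -
    have "cinner (F z *v x) x = - of_real n2 * h z" unfolding h_def using n2 by simp
    also have "\<dots> = \<i> * of_real (- n2 * \<gamma>) + of_real (n2 * \<beta>) * zeta z"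
      unfolding eq[OF z] zeta_eq_on_disc[OF z] using z by (auto simp: field_simps)
    finally show ?thesis .
  qed
  moreover have "0 \<le> n2 * \<beta>" "n2 * \<beta> \<le> (norm x)\<^sup>2"
    using n2 bg unfolding n2_def by (simp_all add: mult_left_le)
  ultimately show ?thesis by blast
qed

lemma pencil_representation:
  fixes F :: "complex \<Rightarrow> 'n::finite cmat"
  assumes hol: "mat_holomorphic_on F (ball 0 1)"
    and lo: "\<And>z x. z \<in> ball 0 1 \<Longrightarrow> Re (zeta z) * (norm x)\<^sup>2 \<le> Re (cinner (F z *v x) x)"
    and up: "\<And>z x. z \<in> ball 0 1 \<Longrightarrow> Re (cinner (F z *v x) x) \<le> 0"
  shows "\<And>z. z \<in> ball 0 1 \<Longrightarrow> F z = cscale \<i> (pencil_A F) + cscale (zeta z) (pencil_B F)"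
    and "self_adjoint (pencil_A F)" "positive_op (pencil_B F)" "contraction (pencil_B F)"
proof -
  obtain fa fb where fab: "\<And>x. 0 \<le> fb x \<and> fb x \<le> (norm x)\<^sup>2 \<and>
      (\<forall>z\<in>ball 0 1. cinner (F z *v x) x = \<i> * of_real (fa x) + of_real (fb x) * zeta z)"
    using quadratic_form_pencil[OF hol lo up] by metis
  have h0: "(0::complex) \<in> ball 0 1" and h1: "(1/2::complex) \<in> ball 0 1"
    by (simp_all add: norm_divide)
  have QB: "cinner (pencil_B F *v x) x = of_real (fb x)" for x
    using fab[of x] h0 h1 unfolding pencil_B_def quadratic_form_cscale quadratic_form_diff
    by (simp add: algebra_simps)
  have QA: "cinner (pencil_A F *v x) x = of_real (fa x)" for x
    using fab[of x] h0 unfolding pencil_A_def quadratic_form_cscale quadratic_form_add QB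
    by (simp add: algebra_simps)
  show "F z = cscale \<i> (pencil_A F) + cscale (zeta z) (pencil_B F)" if z: "z \<in> ball 0 1" for z
  proof -
    have "cinner ((F z - (cscale \<i> (pencil_A F) + cscale (zeta z) (pencil_B F))) *v x) x = 0" for x
      using fab[of x] z by (simp add: quadratic_form_diff quadratic_form_add quadratic_form_cscale QA QB)
    then show ?thesis using quadratic_form_eq_0_imp_zero by fastforce
  qed
  show "self_adjoint (pencil_A F)"
    by (rule self_adjoint_if_quadratic_form_real) (simp add: QA)
  have saB: "self_adjoint (pencil_B F)"
    by (rule self_adjoint_if_quadratic_form_real) (simp add: QB)
  then show "contraction (pencil_B F)"
    by (rule contraction_if_quadratic_form_le) (simp_all add: QB fab)
  show "positive_op (pencil_B F)"
    unfolding positive_op_def by (simp add: QB fab)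
qed

lemma quadratic_vanishing_at_three_points:
  fixes a b c :: complex
  assumes "\<And>w. w \<in> {-1, -3, -1/3} \<Longrightarrow> - a + \<i> * w * b + w * w * c = 0"
  shows "a = 0 \<and> b = 0 \<and> c = 0"
proof -
  have e1: "- a - \<i> * b + c = 0" using assms[of "-1"] by (simp add: algebra_simps)
  have e2: "- a - 3 * \<i> * b + 9 * c = 0" using assms[of "-3"] by (simp add: algebra_simps)
  have e3: "- 9 * a - 3 * \<i> * b + c = 0" using assms[of "-1/3"] by (simp add: field_simps)
  from e1 have c: "c = a + \<i> * b" by (simp add: algebra_simps)
  have "8 * a + 6 * \<i> * b = - a - 3 * \<i> * b + 9 * c" unfolding c by (simp add: algebra_simps)
  with e2 have g2: "8 * a + 6 * \<i> * b = 0" by simp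
  have "- 8 * a - 2 * \<i> * b = - 9 * a - 3 * \<i> * b + c" unfolding c by (simp add: algebra_simps)
  with e3 have g3: "- 8 * a - 2 * \<i> * b = 0" by simp
  have "4 * \<i> * b = (8 * a + 6 * \<i> * b) + (- 8 * a - 2 * \<i> * b)" by (simp add: algebra_simps)
  then have "b = 0" using g2 g3 by simp
  moreover from this g2 have "a = 0" by simp
  ultimately show ?thesis using c by simp
qed

lemma pencil_commute:
  fixes A B A' B' :: "'n::finite cmat"
  assumes F: "\<And>z. z \<in> ball 0 1 \<Longrightarrow> F z = cscale \<i> A + cscale (zeta z) B"
    and G: "\<And>z. z \<in> ball 0 1 \<Longrightarrow> G z = cscale \<i> A' + cscale (zeta z) B'"
    and comm: "\<And>z. z \<in> ball 0 1 \<Longrightarrow> F z ** G z = G z ** F z"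
  shows "A ** A' = A' ** A \<and> A ** B' + B ** A' = A' ** B + B' ** A \<and> B ** B' = B' ** B"
proof -
  have expand: "(cscale \<i> P + cscale w Q) ** (cscale \<i> P' + cscale w Q') =
      cscale (-1) (P ** P') + cscale (\<i> * w) (P ** Q' + Q ** P') + cscale (w * w) (Q ** Q')"
    for w and P Q P' Q' :: "'n cmat"
    by (simp add: matrix_add_ldistrib matrix_add_rdistrib cscale_mult_left cscale_mult_right
        cscale_cscale cscale_add algebra_simps)
  have "\<exists>z\<in>ball 0 1. zeta z = w" if "w \<in> {-1, -3, -1/3}" for w
  proof -
    have "(0::complex) \<in> ball 0 1" "(1/2::complex) \<in> ball 0 1" "(-1/2::complex) \<in> ball 0 1"
      by (simp_all add: norm_divide)
    with that zeta_0 zeta_half zeta_neg_half show ?thesis by fastforce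
  qed
  then have "cscale (-1) (A ** A') + cscale (\<i> * w) (A ** B' + B ** A') + cscale (w * w) (B ** B') =
      cscale (-1) (A' ** A) + cscale (\<i> * w) (A' ** B + B' ** A) + cscale (w * w) (B' ** B)"
    if "w \<in> {-1, -3, -1/3}" for w
    using comm F G expand that by metis
  then have "(A ** A') $ p $ q = (A' ** A) $ p $ q \<and>
      (A ** B' + B ** A') $ p $ q = (A' ** B + B' ** A) $ p $ q \<and> (B ** B') $ p $ q = (B' ** B) $ p $ q"
    for p q
    using quadratic_vanishing_at_three_points[of "(A ** A') $ p $ q - (A' ** A) $ p $ q"
        "(A ** B' + B ** A') $ p $ q - (A' ** B + B' ** A) $ p $ q" "(B ** B') $ p $ q - (B' ** B) $ p $ q"]
    by (fastforce simp: vec_eq_iff algebra_simps)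
  then show ?thesis by (simp add: vec_eq_iff)
qed

section \<open>Factorizing tuples\<close>

lemma factorizing_tuple_classC: "factorizing_tuple n \<psi> \<Longrightarrow> j \<in> {1..n} \<Longrightarrow> \<psi> j \<in> classC"
  unfolding factorizing_tuple_def by auto

lemma classC_invertible:
  assumes "\<psi> \<in> classC" "z \<in> ball 0 1"
  shows "invertible (\<psi> z - mat 1)"
proof (rule invertible_if_ker_trivial)
  fix x assume "(\<psi> z - mat 1) *v x = 0"
  then have "\<psi> z *v x = x" by (simp add: matrix_vector_mult_diff_rdistrib)
  then show "x = 0" using assms unfolding classC_def unit_disc_def by auto
qed

lemma classC_cayley_dissipative:
  assumes "\<psi> \<in> classC" "z \<in> ball 0 1"
  shows "Re (cinner (cayley (\<psi> z) *v x) x) \<le> 0"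
  using assms cayley_dissipative[OF _ classC_invertible[OF assms]]
  unfolding classC_def unit_disc_def by auto

lemma classC_mat_holomorphic_on_cayley:
  assumes "\<psi> \<in> classC"
  shows "mat_holomorphic_on (\<lambda>z. cayley (\<psi> z)) (ball 0 1)"
proof -
  have "mat_holomorphic_on \<psi> (ball 0 1)"
    using assms unfolding classC_def Hinf_op_def mat_holomorphic_on_def unit_disc_def by auto
  then show ?thesis
    unfolding cayley_def using classC_invertible[OF assms]
    by (intro mat_holomorphic_on_mult mat_holomorphic_on_add mat_holomorphic_on_const
        mat_holomorphic_on_matrix_inv mat_holomorphic_on_diff)
qed

text \<open>Constant functions lie in \<open>H\<^sup>2\<close>, so operator identities on \<open>H\<^sup>2\<close> can be tested on them.\<close>
lemma H2_op_eq_on_constants: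
  assumes "H2_op_eq S T" "z \<in> ball 0 1"
  shows "S (\<lambda>_. v) z = T (\<lambda>_. v) z"
proof -
  have "(\<lambda>_. v) \<in> hardy2"
    unfolding hardy2_def
    by (intro CollectI conjI allI exI[of _ "(norm v)\<^sup>2 * (2 * pi)"] impI)
       (auto intro!: holomorphic_intros)
  then show ?thesis using assms unfolding H2_op_eq_def unit_disc_def by blast
qed

lemma mult_chain_apply:
  "mult_chain t \<psi> n f z = foldr (\<lambda>j M. phi_op t (\<psi> j z) ** M) [1..<Suc n] (mat 1) *v f z"
proof -
  have "foldr (\<lambda>j T. mult_op (phi_comp t (\<psi> j)) \<circ> T) js id f z =
      foldr (\<lambda>j M. phi_op t (\<psi> j z) ** M) js (mat 1) *v f z" for js
    by (induction js) (simp_all add: mult_op_def phi_comp_def matrix_vector_mul_assoc)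
  then show ?thesis unfolding mult_chain_def .
qed

lemma factorizing_tuple_cayley_sum:
  assumes fac: "factorizing_tuple n \<psi>" and z: "z \<in> ball 0 1"
  shows "(\<Sum>j\<in>{1..n}. cayley (\<psi> j z)) = mat (zeta z)"
proof -
  have "foldr (\<lambda>j M. mexp (cscale (of_real t) (cayley (\<psi> j z))) ** M) [1..<Suc n] (mat 1) =
      mexp (cscale (of_real t) (mat (zeta z)))" if t: "t \<in> {0..1}" for t
  proof -
    have "mult_chain t \<psi> n (\<lambda>_. v) z = mult_op (phi_comp t zfun) (\<lambda>_. v) z" for v
      using fac t z unfolding factorizing_tuple_def by (auto intro: H2_op_eq_on_constants)
    then have "foldr (\<lambda>j M. phi_op t (\<psi> j z) ** M) [1..<Suc n] (mat 1) = phi_op t (mat z)"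
      by (simp add: matrix_eq mult_chain_apply mult_op_def phi_comp_def zfun_def)
    moreover have "z \<noteq> 1" using z by auto
    ultimately show ?thesis by (simp add: phi_op_eq_mexp_cayley cayley_mat)
  qed
  then have "sum_list (map (\<lambda>j. cayley (\<psi> j z)) [1..<Suc n]) = mat (zeta z)"
    by (rule sum_list_eq_if_foldr_mexp_eq)
  moreover have "{1..n} = set [1..<Suc n]" by auto
  ultimately show ?thesis by (simp only: sum_set_upt_conv_sum_list_nat)
qed

lemma factorizing_tuple_cayley_commute:
  assumes fac: "factorizing_tuple n \<psi>" and jk: "j \<in> {1..n}" "k \<in> {1..n}" and z: "z \<in> ball 0 1"
  shows "cayley (\<psi> j z) ** cayley (\<psi> k z) = cayley (\<psi> k z) ** cayley (\<psi> j z)"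
proof (rule commute_if_mexp_commute)
  fix t :: real assume t: "t \<in> {0..1}"
  have "H2_op_eq (mult_op (phi_comp t (\<psi> j)) \<circ> mult_op (phi_comp t (\<psi> k)))
      (mult_op (phi_comp t (\<psi> k)) \<circ> mult_op (phi_comp t (\<psi> j)))"
    using fac jk t unfolding factorizing_tuple_def by auto
  from H2_op_eq_on_constants[OF this z]
  have "(mult_op (phi_comp t (\<psi> j)) \<circ> mult_op (phi_comp t (\<psi> k))) (\<lambda>_. v) z =
      (mult_op (phi_comp t (\<psi> k)) \<circ> mult_op (phi_comp t (\<psi> j))) (\<lambda>_. v) z" for v .
  then have "phi_op t (\<psi> j z) ** phi_op t (\<psi> k z) = phi_op t (\<psi> k z) ** phi_op t (\<psi> j z)"
    by (simp add: matrix_eq mult_op_def phi_comp_def matrix_vector_mul_assoc)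
  then show "mexp (cscale (of_real t) (cayley (\<psi> j z))) ** mexp (cscale (of_real t) (cayley (\<psi> k z))) =
      mexp (cscale (of_real t) (cayley (\<psi> k z))) ** mexp (cscale (of_real t) (cayley (\<psi> j z)))"
    by (simp add: phi_op_eq_mexp_cayley)
qed

text \<open>Each summand of \<open>\<Sum>\<^sub>k Re \<langle>F\<^sub>k(z)x, x\<rangle> = Re \<zeta>(z) |x|\<^sup>2\<close> is nonpositive, so each dominates the sum.\<close>
lemma factorizing_tuple_cayley_lower_bound:
  assumes fac: "factorizing_tuple n \<psi>" and j: "j \<in> {1..n}" and z: "z \<in> ball 0 1"
  shows "Re (zeta z) * (norm x)\<^sup>2 \<le> Re (cinner (cayley (\<psi> j z) *v x) x)"
proof -
  note classC = factorizing_tuple_classC[OF fac]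
  have "Re (zeta z) * (norm x)\<^sup>2 = Re (cinner ((\<Sum>k\<in>{1..n}. cayley (\<psi> k z)) *v x) x)"
    unfolding factorizing_tuple_cayley_sum[OF fac z] by (simp add: mat_mvec cinner_scale_left cinner_self)
  also have "\<dots> = (\<Sum>k\<in>{1..n}. Re (cinner (cayley (\<psi> k z) *v x) x))"
    by (simp add: quadratic_form_sum)
  also have "\<dots> = Re (cinner (cayley (\<psi> j z) *v x) x) + (\<Sum>k\<in>{1..n} - {j}. Re (cinner (cayley (\<psi> k z) *v x) x))"
    by (rule sum.remove) (use j in auto)
  also have "\<dots> \<le> Re (cinner (cayley (\<psi> j z) *v x) x)"
    using sum_nonpos[of "{1..n} - {j}" "\<lambda>k. Re (cinner (cayley (\<psi> k z) *v x) x)"]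
      classC_cayley_dissipative[OF classC z] by force
  finally show ?thesis .
qed

lemma factorizing_tuple_AB_conditions:
  assumes fac: "factorizing_tuple n \<psi>"
  shows "AB_conditions n \<psi> (\<lambda>j. pencil_A (\<lambda>z. cayley (\<psi> j z))) (\<lambda>j. pencil_B (\<lambda>z. cayley (\<psi> j z)))"
proof -
  let ?F = "\<lambda>j z. cayley (\<psi> j z)"
  note classC = factorizing_tuple_classC[OF fac]
  note rep = pencil_representation[OF classC_mat_holomorphic_on_cayley[OF classC]
      factorizing_tuple_cayley_lower_bound[OF fac] classC_cayley_dissipative[OF classC]]
  have "(\<Sum>j\<in>{1..n}. ?F j z) = cscale \<i> 0 + cscale (zeta z) (mat 1)" if "z \<in> ball 0 1" for z
    using factorizing_tuple_cayley_sum[OF fac that] by (simp add: cscale_mat)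
  from pencil_coeffs[OF this]
  have "(\<Sum>j\<in>{1..n}. pencil_A (?F j)) = 0" "(\<Sum>j\<in>{1..n}. pencil_B (?F j)) = mat 1"
    by (simp_all add: pencil_A_sum pencil_B_sum)
  moreover have "\<forall>j\<in>{1..n}. \<forall>k\<in>{1..n}.
      pencil_A (?F j) ** pencil_A (?F k) = pencil_A (?F k) ** pencil_A (?F j) \<and>
      pencil_A (?F j) ** pencil_B (?F k) + pencil_B (?F j) ** pencil_A (?F k) =
        pencil_A (?F k) ** pencil_B (?F j) + pencil_B (?F k) ** pencil_A (?F j) \<and>
      pencil_B (?F j) ** pencil_B (?F k) = pencil_B (?F k) ** pencil_B (?F j)"
    using pencil_commute[OF rep(1) rep(1) factorizing_tuple_cayley_commute[OF fac]] by blast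
  ultimately show ?thesis
    unfolding AB_conditions_def using rep(1-4) by (simp add: unit_disc_def cayley_def)
qed

lemma AB_conditions_unique:
  assumes "AB_conditions n \<psi> A B" "j \<in> {1..n}"
  shows "A j = pencil_A (\<lambda>z. cayley (\<psi> j z)) \<and> B j = pencil_B (\<lambda>z. cayley (\<psi> j z))"
  using pencil_coeffs[of "\<lambda>z. cayley (\<psi> j z)" "A j" "B j"] assms
  unfolding AB_conditions_def unit_disc_def cayley_def by auto

lemma AB_conditions_inverse_cayley:
  assumes "AB_conditions n \<psi> A B" "\<psi> j \<in> classC" "j \<in> {1..n}" "z \<in> unit_disc"
  shows "\<psi> j z = (cscale \<i> (A j) + cscale (zeta z) (B j) + mat 1) **
      matrix_inv (cscale \<i> (A j) + cscale (zeta z) (B j) - mat 1)"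
proof -
  have "cscale \<i> (A j) + cscale (zeta z) (B j) = cayley (\<psi> j z)"
    using assms unfolding AB_conditions_def cayley_def by simp
  then show ?thesis
    using cayley_cayley[OF classC_invertible[OF assms(2)]] assms(4)
    unfolding unit_disc_def cayley_def[of "cayley _"] by metis
qed

theorem theorem4p9:
  fixes n :: nat and \<psi> :: "nat \<Rightarrow> complex \<Rightarrow> complex ^ 'n ^ 'n"
  assumes "n \<ge> 2"
    and "factorizing_tuple n \<psi>"
  shows "\<exists>A B. AB_conditions n \<psi> A B \<and>
           (\<forall>A' B'. AB_conditions n \<psi> A' B' \<longrightarrow> (\<forall>j\<in>{1..n}. A' j = A j \<and> B' j = B j)) \<and>
           (\<forall>z\<in>unit_disc. \<forall>j\<in>{1..n}.
              \<psi> j z = (cscale \<i> (A j) + cscale (zeta z) (B j) + mat 1) **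
                       matrix_inv (cscale \<i> (A j) + cscale (zeta z) (B j) - mat 1))"
proof -
  let ?A = "\<lambda>j. pencil_A (\<lambda>z. cayley (\<psi> j z))" and ?B = "\<lambda>j. pencil_B (\<lambda>z. cayley (\<psi> j z))"
  have AB: "AB_conditions n \<psi> ?A ?B"
    using factorizing_tuple_AB_conditions[OF assms(2)] .
  moreover have "\<forall>A' B'. AB_conditions n \<psi> A' B' \<longrightarrow> (\<forall>j\<in>{1..n}. A' j = ?A j \<and> B' j = ?B j)"
    using AB_conditions_unique by blast
  moreover have "\<forall>z\<in>unit_disc. \<forall>j\<in>{1..n}.
      \<psi> j z = (cscale \<i> (?A j) + cscale (zeta z) (?B j) + mat 1) **
        matrix_inv (cscale \<i> (?A j) + cscale (zeta z) (?B j) - mat 1)"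
    using AB_conditions_inverse_cayley[OF AB factorizing_tuple_classC[OF assms(2)]] by blast
  ultimately show ?thesis by blast
qed

end
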